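(* Let $\mathbb Y=\mathbb R^m$, $g\colon\mathbb X\to\mathbb R^m$ twice continuously differentiable, $D\subset\mathbb R^m$ closed and polyhedral locally around $g(\bar x)$, $\Phi(x):=g(x)-D$, $(\bar x,0)\in\operatorname{gph}\Phi$, $u\in\mathbb S_{\mathbb X}$. Write $K:=\mathcal N_{\mathcal T_D(g(\bar x))}(\nabla g(\bar x)u)$. Assume: if $\nabla g(\bar x)^*y^*=0$, $\nabla^2\langle y^*,g\rangle(\bar x)(u)+\nabla g(\bar x)^*z^*=0$, $y^*\in K$, $z^*\in\mathcal T_K(y^* )$, then $y^*=0$. Consider the system (S'): $x^*=\nabla^2\langle y^*,g\rangle(\bar x)(u)+\nabla g(\bar x)^*z^*$, $y^*\in K\cap\ker\nabla g(\bar x)^*$, $z^*\in\mathcal T_K(y^* )$. (i) If for every $x^*\in\mathbb X$, $y^*,z^*\in\mathbb R^m$ satisfying (S') there is $\lambda\in\mathcal N_D(g(\bar x))$ with $x^*=\nabla g(\bar x)^*\lambda$, then $\Phi$ is asymptotically regular at $(\bar x,0)$ in direction $u$. (ii) If for every such $x^*,y^*,z^*$ there is $\lambda\in K$ with $x^*=\nabla g(\bar x)^*\lambda$, then $\Phi$ is strongly asymptotically regular at $(\bar x,0)$ in direction $u$.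
   Context: $D$ is polyhedral locally around $y$ if $D\cap V$ is a finite union of convex polyhedra for some neighbourhood $V$ of $y$. $\mathcal T_Q(z)$ is the Bouligand tangent cone, $\mathcal N_Q(z)$ the limiting normal cone (for convex $Q$ the usual normal cone). $\nabla^2\langle y^*,g\rangle(\bar x)(u)$ is the Hessian of $x\mapsto\langle y^*,g(x)\rangle$ at $\bar x$ applied to $u$. (Strong) asymptotic regularity in direction $u$ at $(\bar x,\bar y)$: for all $\{(x_k,y_k)\}\subset\operatorname{gph}\Phi$, $\{x_k^*\}$, $\{\lambda_k\}$, $x^*,y^*$ with $x_k\notin\Phi^{-1}(\bar y)$, $y_k\ne\bar y$, $x_k^*\in\widehat D^*\Phi(x_k,y_k)(\lambda_k)$ (regular coderivative), $x_k\to\bar x$, $y_k\to\bar y$, $x_k^*\to x^*$, $(x_k-\bar x)/\|x_k-\bar x\|\to u$, $(y_k-\bar y)/\|x_k-\bar x\|\to0$, $\|\lambda_k\|\to\infty$, $(y_k-\bar y)/\|y_k-\bar y\|-\lambda_k/\|\lambda_k\|\to0$, $(\|y_k-\bar y\|/\|x_k-\bar x\|)\lambda_k\to y^*$, one has $x^*\in\operatorname{Im}D^*\Phi(\bar x,\bar y)$ (limiting coderivative; resp. $x^*\in\operatorname{Im}D^*\Phi((\bar x,\bar y);(u,0))$, directional limiting coderivative, for strong), $\operatorname{Im}\Psi=\bigcup_z\Psi(z)$. *)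

theory Defs
  imports "HOL-Analysis.Analysis"
begin

definition locally_polyhedral :: "'a::euclidean_space set \<Rightarrow> 'a \<Rightarrow> bool" where
  "locally_polyhedral D y \<longleftrightarrow>
     (\<exists>V F. y \<in> interior V \<and> finite F \<and> (\<forall>P\<in>F. polyhedron P) \<and> D \<inter> V = \<Union>F)"

definition tangent_cone :: "'a::real_normed_vector set \<Rightarrow> 'a \<Rightarrow> 'a set" where
  "tangent_cone Q z = {d. z \<in> Q \<and> (\<exists>t dk. (\<forall>k. t k > 0) \<and> t \<longlonglongrightarrow> 0 \<and> dk \<longlonglongrightarrow> d
        \<and> (\<forall>k. z + t k *\<^sub>R dk k \<in> Q))}"

definition regular_normal_cone :: "'a::real_inner set \<Rightarrow> 'a \<Rightarrow> 'a set" where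
  "regular_normal_cone Q z = {v. z \<in> Q \<and> (\<forall>e>0. \<exists>\<delta>>0. \<forall>z'\<in>Q. norm (z' - z) < \<delta> \<longrightarrow>
        inner v (z' - z) \<le> e * norm (z' - z))}"

definition limiting_normal_cone :: "'a::real_inner set \<Rightarrow> 'a \<Rightarrow> 'a set" where
  "limiting_normal_cone Q z = {v. z \<in> Q \<and> (\<exists>zk vk. (\<forall>k. zk k \<in> Q) \<and> zk \<longlonglongrightarrow> z \<and> vk \<longlonglongrightarrow> v
        \<and> (\<forall>k. vk k \<in> regular_normal_cone Q (zk k)))}"

definition dir_limiting_normal_cone :: "'a::real_inner set \<Rightarrow> 'a \<Rightarrow> 'a \<Rightarrow> 'a set" where
  "dir_limiting_normal_cone Q z d = {v. z \<in> Q \<and> (\<exists>t dk vk. (\<forall>k. t k > 0) \<and> t \<longlonglongrightarrow> 0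
        \<and> dk \<longlonglongrightarrow> d \<and> vk \<longlonglongrightarrow> v
        \<and> (\<forall>k. vk k \<in> regular_normal_cone Q (z + t k *\<^sub>R dk k)))}"

definition gph :: "('a \<Rightarrow> 'b set) \<Rightarrow> ('a \<times> 'b) set" where
  "gph \<Phi> = {(x, y). y \<in> \<Phi> x}"

definition regular_coderiv ::
  "('a::real_inner \<Rightarrow> 'b::real_inner set) \<Rightarrow> 'a \<Rightarrow> 'b \<Rightarrow> 'b \<Rightarrow> 'a set" where
  "regular_coderiv \<Phi> x y l = {xs. (xs, - l) \<in> regular_normal_cone (gph \<Phi>) (x, y)}"

definition limiting_coderiv ::
  "('a::real_inner \<Rightarrow> 'b::real_inner set) \<Rightarrow> 'a \<Rightarrow> 'b \<Rightarrow> 'b \<Rightarrow> 'a set" where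
  "limiting_coderiv \<Phi> x y l = {xs. (xs, - l) \<in> limiting_normal_cone (gph \<Phi>) (x, y)}"

definition dir_limiting_coderiv ::
  "('a::real_inner \<Rightarrow> 'b::real_inner set) \<Rightarrow> 'a \<Rightarrow> 'b \<Rightarrow> 'a \<Rightarrow> 'b \<Rightarrow> 'b \<Rightarrow> 'a set" where
  "dir_limiting_coderiv \<Phi> x y u v l =
     {xs. (xs, - l) \<in> dir_limiting_normal_cone (gph \<Phi>) (x, y) (u, v)}"

definition Im :: "('c \<Rightarrow> 'a set) \<Rightarrow> 'a set" where
  "Im \<Psi> = (\<Union>z. \<Psi> z)"

definition asym_limit ::
  "('a::real_inner \<Rightarrow> 'b::real_inner set) \<Rightarrow> 'a \<Rightarrow> 'b \<Rightarrow> 'a \<Rightarrow> 'a \<Rightarrow> bool" where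
  "asym_limit \<Phi> xb yb u xs \<longleftrightarrow>
     (\<exists>(xk::nat \<Rightarrow> 'a) (yk::nat \<Rightarrow> 'b) (xsk::nat \<Rightarrow> 'a) (lk::nat \<Rightarrow> 'b) (ys::'b).
        (\<forall>k. (xk k, yk k) \<in> gph \<Phi>) \<and>
        (\<forall>k. yb \<notin> \<Phi> (xk k)) \<and>
        (\<forall>k. yk k \<noteq> yb) \<and>
        (\<forall>k. xsk k \<in> regular_coderiv \<Phi> (xk k) (yk k) (lk k)) \<and>
        xk \<longlonglongrightarrow> xb \<and> yk \<longlonglongrightarrow> yb \<and> xsk \<longlonglongrightarrow> xs \<and>
        (\<lambda>k. (1 / norm (xk k - xb)) *\<^sub>R (xk k - xb)) \<longlonglongrightarrow> u \<and>
        (\<lambda>k. (1 / norm (xk k - xb)) *\<^sub>R (yk k - yb)) \<longlonglongrightarrow> 0 \<and>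
        filterlim (\<lambda>k. norm (lk k)) at_top sequentially \<and>
        (\<lambda>k. (1 / norm (yk k - yb)) *\<^sub>R (yk k - yb) - (1 / norm (lk k)) *\<^sub>R lk k) \<longlonglongrightarrow> 0 \<and>
        (\<lambda>k. (norm (yk k - yb) / norm (xk k - xb)) *\<^sub>R lk k) \<longlonglongrightarrow> ys)"

definition asymptotically_regular ::
  "('a::real_inner \<Rightarrow> 'b::real_inner set) \<Rightarrow> 'a \<Rightarrow> 'b \<Rightarrow> 'a \<Rightarrow> bool" where
  "asymptotically_regular \<Phi> xb yb u \<longleftrightarrow>
     (\<forall>xs. asym_limit \<Phi> xb yb u xs \<longrightarrow> xs \<in> Im (limiting_coderiv \<Phi> xb yb))"

definition strongly_asymptotically_regular ::
  "('a::real_inner \<Rightarrow> 'b::real_inner set) \<Rightarrow> 'a \<Rightarrow> 'b \<Rightarrow> 'a \<Rightarrow> bool" where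
  "strongly_asymptotically_regular \<Phi> xb yb u \<longleftrightarrow>
     (\<forall>xs. asym_limit \<Phi> xb yb u xs \<longrightarrow> xs \<in> Im (dir_limiting_coderiv \<Phi> xb yb u 0))"

end

theory Submission
  imports Defs
begin

text \<open>
  Near \<open>g x\<^sub>0\<close> the polyhedral set \<open>D\<close> coincides with \<open>g x\<^sub>0 + T\<close>, where the tangent cone \<open>T\<close> is a
  finite union of finitely generated cones; hence the regular normal cones of \<open>D\<close> near \<open>g x\<^sub>0\<close>
  range over a finite family of polyhedral cones, all of which have closed linear images.

  Along a sequence from the definition of asymptotic regularity, \<open>x\<^sub>k\<^sup>* = \<nabla>g(x\<^sub>k)\<^sup>*\<lambda>\<^sub>k\<close> with \<open>\<lambda>\<^sub>k\<close> in these
  normal cones, and the second-order expansion of \<open>\<nabla>g\<close> gives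
  \<open>x\<^sub>k\<^sup>* = A\<lambda>\<^sub>k + t\<^sub>k H\<lambda>\<^sub>k + o(t\<^sub>k |\<lambda>\<^sub>k|)\<close> with \<open>A = \<nabla>g(x\<^sub>0)\<^sup>*\<close>, \<open>H = \<nabla>\<^sup>2\<langle>\<cdot>, g\<rangle>(x\<^sub>0)(u)\<close> and
  \<open>t\<^sub>k = |x\<^sub>k - x\<^sub>0|\<close>. On a subsequence the normal cone is a fixed polyhedral cone \<open>Q\<close>, which lies in the
  limiting normal cone \<open>K\<close> of \<open>T\<close> at \<open>\<nabla>g(x\<^sub>0)u\<close>. If \<open>t\<^sub>k|\<lambda>\<^sub>k|\<close> stays bounded, the limits of \<open>t\<^sub>k\<lambda>\<^sub>k\<close>
  and \<open>A\<lambda>\<^sub>k\<close> solve the system (S'); if \<open>t\<^sub>k|\<lambda>\<^sub>k| \<rightarrow> \<infinity>\<close>, dividing by it yields a nonzero solution of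
  the homogeneous system, which the qualification condition excludes. Finally \<open>A\<lambda>\<close> is a limiting
  coderivative for \<open>\<lambda> \<in> N\<^sub>D(g x\<^sub>0)\<close> and a directional limiting coderivative for \<open>\<lambda> \<in> K\<close>.
\<close>

lemma mem_cbox_minus_One_One:
  fixes x :: "'a::euclidean_space"
  assumes "norm x \<le> 1"
  shows "x \<in> cbox (-One) One"
  unfolding mem_box
proof (intro ballI conjI)
  fix i :: 'a assume i: "i \<in> Basis"
  have "\<bar>x \<bullet> i\<bar> \<le> 1" using Basis_le_norm[OF i, of x] assms by linarith
  then show "-One \<bullet> i \<le> x \<bullet> i" "x \<bullet> i \<le> One \<bullet> i" using i by (auto simp: inner_minus_left)
qed

text \<open>Minkowski--Weyl for cones: the truncation to a box is a polytope, whose vertices generate.\<close>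
lemma polyhedral_cone_finitely_generated:
  fixes C :: "'a::euclidean_space set"
  assumes "polyhedron C" "conic C" "C \<noteq> {}"
  obtains S where "finite S" "C = convex_cone hull S"
proof -
  have "polytope (C \<inter> cbox (-One) One)"
    using assms(1) by (simp add: polytope_eq_bounded_polyhedron bounded_Int)
  then obtain S where S: "finite S" "C \<inter> cbox (-One) One = convex hull S"
    unfolding polytope_def by blast
  have cone: "convex_cone C"
    using assms polyhedron_imp_convex unfolding convex_cone_def by blast
  have "convex_cone hull S \<subseteq> C"
    by (rule hull_minimal) (use S hull_subset[of S convex] cone in auto)
  moreover have "c \<in> convex_cone hull S" if c: "c \<in> C" for c
  proof (cases "c = 0")
    case False
    let ?d = "(1 / norm c) *\<^sub>R c"
    have "?d \<in> C" using c assms(2) by (simp add: conicD)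
    moreover have "norm ?d \<le> 1" using False by simp
    ultimately have "?d \<in> convex hull S" using S mem_cbox_minus_One_One by blast
    then have "norm c *\<^sub>R ?d \<in> convex_cone hull S"
      using convex_cone_hull_mul convex_hull_subset_convex_cone_hull norm_ge_zero by blast
    then show ?thesis using False by simp
  qed (simp add: convex_cone_hull_contains_0)
  ultimately show ?thesis using S that by blast
qed

lemma closed_linear_image_polyhedral_cone:
  fixes f :: "'a::euclidean_space \<Rightarrow> 'b::euclidean_space"
  assumes "polyhedron C" "conic C" "linear f"
  shows "closed (f ` C)"
proof (cases "C = {}")
  case False
  then obtain S where "finite S" "C = convex_cone hull S"
    using polyhedral_cone_finitely_generated assms(1,2) by blast
  then show ?thesis
    by (metis assms(3) closed_convex_cone_hull convex_cone_hull_linear_image finite_imageI)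
qed simp

lemma convex_cone_hull_finite_nonneg_combination:
  fixes S :: "'a::euclidean_space set"
  assumes "finite S" "x \<in> convex_cone hull S"
  obtains a where "\<forall>s\<in>S. 0 \<le> a s" "x = (\<Sum>s\<in>S. a s *\<^sub>R s)"
proof -
  from assms(2) consider "x = 0" | y c where "y \<in> convex hull S" "c \<ge> 0" "x = c *\<^sub>R y"
    unfolding convex_cone_hull_convex_hull by auto
  then show ?thesis
  proof cases
    case 1 then show ?thesis by (intro that[of "\<lambda>_. 0"]) auto
  next
    case 2
    then obtain b where "\<forall>s\<in>S. 0 \<le> b s" "y = (\<Sum>s\<in>S. b s *\<^sub>R s)"
      using convex_hull_finite[OF assms(1)] by auto
    then show ?thesis
      by (intro that[of "\<lambda>s. c * b s"]) (use 2 in \<open>auto simp: scaleR_sum_right\<close>)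
  qed
qed

lemma nonneg_combination_mem_convex_cone_hull:
  assumes "finite T" "T \<subseteq> S" "\<forall>s\<in>T. 0 \<le> a s"
  shows "(\<Sum>s\<in>T. a s *\<^sub>R s) \<in> convex_cone hull S"
  using assms
proof (induction T rule: finite_induct)
  case (insert x T)
  then have "a x *\<^sub>R x \<in> convex_cone hull S" by (simp add: convex_cone_hull_mul hull_inc)
  with insert show ?case by (simp add: convex_cone_hull_add)
qed (simp add: convex_cone_hull_contains_0)

definition local_cone :: "'a::real_normed_vector set \<Rightarrow> 'a \<Rightarrow> 'a set \<Rightarrow> bool" where
  "local_cone S p C \<longleftrightarrow> (\<exists>\<epsilon>>0. \<forall>w. norm w < \<epsilon> \<longrightarrow> (p + w \<in> S \<longleftrightarrow> w \<in> C))"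

lemma local_cone_mem_iff_zero_mem: "local_cone S p C \<Longrightarrow> p \<in> S \<longleftrightarrow> 0 \<in> C"
  unfolding local_cone_def by (metis add.right_neutral norm_zero)

lemma local_cone_Int:
  assumes "local_cone A p C" "local_cone B p C'"
  shows "local_cone (A \<inter> B) p (C \<inter> C')"
proof -
  obtain \<epsilon> \<epsilon>' where "\<epsilon> > 0" "\<epsilon>' > 0"
    and "\<forall>w. norm w < \<epsilon> \<longrightarrow> (p + w \<in> A \<longleftrightarrow> w \<in> C)" "\<forall>w. norm w < \<epsilon>' \<longrightarrow> (p + w \<in> B \<longleftrightarrow> w \<in> C')"
    using assms unfolding local_cone_def by blast
  then show ?thesis unfolding local_cone_def by (intro exI[of _ "min \<epsilon> \<epsilon>'"]) auto
qed

lemma local_cone_Un: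
  assumes "local_cone A p C" "local_cone B p C'"
  shows "local_cone (A \<union> B) p (C \<union> C')"
proof -
  obtain \<epsilon> \<epsilon>' where "\<epsilon> > 0" "\<epsilon>' > 0"
    and "\<forall>w. norm w < \<epsilon> \<longrightarrow> (p + w \<in> A \<longleftrightarrow> w \<in> C)" "\<forall>w. norm w < \<epsilon>' \<longrightarrow> (p + w \<in> B \<longleftrightarrow> w \<in> C')"
    using assms unfolding local_cone_def by blast
  then show ?thesis unfolding local_cone_def by (intro exI[of _ "min \<epsilon> \<epsilon>'"]) auto
qed

lemma local_cone_INT:
  assumes "finite I" "\<And>i. i \<in> I \<Longrightarrow> local_cone (A i) p (C i)"
  shows "local_cone (\<Inter>i\<in>I. A i) p (\<Inter>i\<in>I. C i)"
  using assms
proof (induction I rule: finite_induct)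
  case empty
  show ?case unfolding local_cone_def by (auto intro: exI[of _ 1])
qed (simp add: local_cone_Int)

lemma local_cone_UN:
  assumes "finite I" "\<And>i. i \<in> I \<Longrightarrow> local_cone (A i) p (C i)"
  shows "local_cone (\<Union>i\<in>I. A i) p (\<Union>i\<in>I. C i)"
  using assms
proof (induction I rule: finite_induct)
  case empty
  show ?case unfolding local_cone_def by (auto intro: exI[of _ 1])
qed (simp add: local_cone_Un)

lemma local_cone_halfspace_le:
  assumes "a \<bullet> p \<le> b"
  shows "local_cone {x. a \<bullet> x \<le> b} p (if a \<bullet> p = b then {w. a \<bullet> w \<le> 0} else UNIV)"
proof (cases "a \<bullet> p = b")
  case False
  define \<epsilon> where "\<epsilon> = (b - a \<bullet> p) / (norm a + 1)"
  have na: "norm a + 1 > 0" by (simp add: add_nonneg_pos)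
  have "\<epsilon> > 0" using assms False na by (simp add: \<epsilon>_def)
  moreover have "a \<bullet> (p + w) \<le> b" if "norm w < \<epsilon>" for w
  proof -
    have "a \<bullet> w \<le> norm a * norm w" by (rule norm_cauchy_schwarz)
    also have "\<dots> \<le> (norm a + 1) * \<epsilon>"
      using that by (intro mult_mono) auto
    also have "\<dots> = b - a \<bullet> p" using na by (simp add: \<epsilon>_def)
    finally show ?thesis by (simp add: inner_add_right)
  qed
  ultimately show ?thesis using False unfolding local_cone_def by auto
qed (auto simp: local_cone_def inner_add_right intro: exI[of _ 1])

lemma local_cone_empty_if_notin:
  assumes "closed P" "p \<notin> P"
  shows "local_cone P p {}"
proof -
  obtain \<epsilon> where "\<epsilon> > 0" "ball p \<epsilon> \<subseteq> - P"
    using assms open_contains_ball[of "- P"] by blast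
  then show ?thesis unfolding local_cone_def by (auto simp: subset_iff dist_norm)
qed

lemma local_cone_Int_interior:
  assumes "p \<in> interior V" "local_cone (S \<inter> V) p C"
  shows "local_cone S p C"
proof -
  obtain \<delta> where "\<delta> > 0" "ball p \<delta> \<subseteq> V" using assms(1) mem_interior by blast
  moreover obtain \<epsilon> where "\<epsilon> > 0" "\<forall>w. norm w < \<epsilon> \<longrightarrow> (p + w \<in> S \<inter> V \<longleftrightarrow> w \<in> C)"
    using assms(2) unfolding local_cone_def by blast
  ultimately show ?thesis
    unfolding local_cone_def by (intro exI[of _ "min \<epsilon> \<delta>"]) (auto simp: subset_iff dist_norm)
qed

lemma polyhedron_local_cone:
  fixes P :: "'a::euclidean_space set"
  assumes "polyhedron P" "p \<in> P"
  obtains C where "polyhedron C" "conic C" "local_cone P p C"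
proof -
  obtain F a b where F: "finite F" "P = \<Inter>F" and ab: "\<And>h. h \<in> F \<Longrightarrow> h = {x. a h \<bullet> x \<le> b h}"
    using assms(1) unfolding polyhedron_def by metis
  define C where "C h = (if a h \<bullet> p = b h then {w. a h \<bullet> w \<le> 0} else UNIV)" for h
  have "local_cone h p (C h)" if "h \<in> F" for h
  proof -
    have "a h \<bullet> p \<le> b h" using assms(2) F(2) ab[OF that] that by auto
    then show ?thesis using local_cone_halfspace_le ab[OF that] unfolding C_def by metis
  qed
  then have "local_cone P p (\<Inter>h\<in>F. C h)"
    using local_cone_INT[OF F(1), of "\<lambda>h. h" p C] F(2) by simp
  moreover have "polyhedron (\<Inter>h\<in>F. C h)"
    using F(1) by (intro polyhedron_Inter) (auto simp: C_def polyhedron_halfspace_le)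
  moreover have "conic (\<Inter>h\<in>F. C h)"
    by (intro conic_Inter) (auto simp: C_def conic_halfspace_le conic_UNIV)
  ultimately show ?thesis using that by blast
qed

lemma locally_polyhedral_local_cone:
  fixes D :: "'a::euclidean_space set"
  assumes "locally_polyhedral D p"
  obtains \<S> where "finite \<S>" "\<forall>S\<in>\<S>. finite S" "local_cone D p (\<Union>S\<in>\<S>. convex_cone hull S)"
proof -
  obtain V F where VF: "p \<in> interior V" "finite F" "\<forall>P\<in>F. polyhedron P" "D \<inter> V = \<Union>F"
    using assms unfolding locally_polyhedral_def by blast
  have "\<exists>S. finite S \<and> local_cone P p (if p \<in> P then convex_cone hull S else {})"
    if P: "P \<in> F" for P
  proof (cases "p \<in> P")
    case True
    then obtain C where C: "polyhedron C" "conic C" "local_cone P p C"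
      using polyhedron_local_cone VF(3) P by metis
    then have "C \<noteq> {}" using local_cone_mem_iff_zero_mem True by blast
    then show ?thesis using C True polyhedral_cone_finitely_generated by metis
  next
    case False
    then show ?thesis using local_cone_empty_if_notin VF(3) P polyhedron_imp_closed by auto
  qed
  then obtain Sf where Sf: "\<And>P. P \<in> F \<Longrightarrow> finite (Sf P)"
    "\<And>P. P \<in> F \<Longrightarrow> local_cone P p (if p \<in> P then convex_cone hull Sf P else {})"
    by metis
  have "(\<Union>P\<in>F. if p \<in> P then convex_cone hull Sf P else {})
      = (\<Union>S\<in>Sf ` {P\<in>F. p \<in> P}. convex_cone hull S)"
    by auto
  moreover have "local_cone (\<Union>P\<in>F. P) p (\<Union>P\<in>F. if p \<in> P then convex_cone hull Sf P else {})"
    by (rule local_cone_UN[OF VF(2) Sf(2)])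
  ultimately have "local_cone (D \<inter> V) p (\<Union>S\<in>Sf ` {P\<in>F. p \<in> P}. convex_cone hull S)"
    unfolding VF(4) image_ident by simp
  moreover have "finite (Sf ` {P\<in>F. p \<in> P})" using VF(2) by simp
  ultimately show ?thesis
    using that Sf(1) local_cone_Int_interior[OF VF(1)] by blast
qed

lemma tangent_cone_subset_local_cone:
  assumes loc: "local_cone D p T" and "closed T" "conic T"
  shows "tangent_cone D p \<subseteq> T"
proof
  fix d assume "d \<in> tangent_cone D p"
  then obtain t dk where t: "\<forall>k. t k > 0" "t \<longlonglongrightarrow> 0" "dk \<longlonglongrightarrow> d" "\<forall>k. p + t k *\<^sub>R dk k \<in> D"
    unfolding tangent_cone_def by blast
  obtain \<epsilon> where \<epsilon>: "\<epsilon> > 0" "\<And>w. norm w < \<epsilon> \<Longrightarrow> p + w \<in> D \<longleftrightarrow> w \<in> T"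
    using loc unfolding local_cone_def by blast
  have "(\<lambda>k. t k *\<^sub>R dk k) \<longlonglongrightarrow> 0"
    using tendsto_scaleR[OF t(2) t(3)] by simp
  then have "eventually (\<lambda>k. norm (t k *\<^sub>R dk k) < \<epsilon>) sequentially"
    using order_tendstoD(2)[OF tendsto_norm_zero \<epsilon>(1)] by blast
  then have "eventually (\<lambda>k. dk k \<in> T) sequentially"
  proof (rule eventually_mono)
    fix k assume "norm (t k *\<^sub>R dk k) < \<epsilon>"
    then have "t k *\<^sub>R dk k \<in> T" using \<epsilon>(2) t(4) by blast
    then have "inverse (t k) *\<^sub>R (t k *\<^sub>R dk k) \<in> T"
      using \<open>conic T\<close> conicD t(1) by (metis inverse_nonnegative_iff_nonnegative less_eq_real_def)
    then show "dk k \<in> T" using t(1) by (simp add: less_imp_neq[symmetric])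
  qed
  then show "d \<in> T" using Lim_in_closed_set[OF \<open>closed T\<close> _ _ t(3)] by simp
qed

lemma local_cone_subset_tangent_cone:
  assumes loc: "local_cone D p T" and "conic T" "p \<in> D"
  shows "T \<subseteq> tangent_cone D p"
proof
  fix d assume d: "d \<in> T"
  obtain \<epsilon> where \<epsilon>: "\<epsilon> > 0" "\<And>w. norm w < \<epsilon> \<Longrightarrow> p + w \<in> D \<longleftrightarrow> w \<in> T"
    using loc unfolding local_cone_def by blast
  define c where "c = \<epsilon> / (norm d + 1)"
  define t where "t k = c * inverse (real (Suc k))" for k
  have nd: "norm d + 1 > 0" by (simp add: add_nonneg_pos)
  have c: "c > 0" "c * norm d < \<epsilon>"
    using \<epsilon>(1) nd by (simp_all add: c_def field_simps)
  have tpos: "\<forall>k. t k > 0" using c by (simp add: t_def)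
  have "t \<longlonglongrightarrow> 0"
    unfolding t_def using tendsto_mult_right_zero[OF LIMSEQ_inverse_real_of_nat] by simp
  moreover have "p + t k *\<^sub>R d \<in> D" for k
  proof -
    have "t k \<le> c" using c by (simp add: t_def field_simps)
    then have "norm (t k *\<^sub>R d) < \<epsilon>"
      using c tpos mult_right_mono[of "t k" c "norm d"] by (simp add: abs_of_pos)
    then show ?thesis using \<epsilon>(2) conicD[OF \<open>conic T\<close> d] tpos less_imp_le by blast
  qed
  ultimately show "d \<in> tangent_cone D p"
    unfolding tangent_cone_def using assms(3) tpos by (auto intro!: exI[of _ t] exI[of _ "\<lambda>_. d"])
qed

lemma tangent_cone_local_cone:
  assumes loc: "local_cone D p T" and "closed T" "conic T"
  shows "tangent_cone D p = T"
proof (cases "T = {}")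
  case True
  then show ?thesis using local_cone_mem_iff_zero_mem[OF loc] by (simp add: tangent_cone_def)
next
  case False
  then have "p \<in> D" using local_cone_mem_iff_zero_mem[OF loc] conic_contains_0 \<open>conic T\<close> by blast
  then show ?thesis
    using tangent_cone_subset_local_cone[OF assms] local_cone_subset_tangent_cone[OF loc \<open>conic T\<close>] by blast
qed

lemma regular_normal_cone_antimono_local:
  assumes "z \<in> A" "e > 0" "A \<inter> ball z e \<subseteq> B"
  shows "regular_normal_cone B z \<subseteq> regular_normal_cone A z"
proof
  fix v assume v: "v \<in> regular_normal_cone B z"
  have "\<exists>\<delta>>0. \<forall>z'\<in>A. norm (z' - z) < \<delta> \<longrightarrow> inner v (z' - z) \<le> \<epsilon> * norm (z' - z)" if "\<epsilon> > 0" for \<epsilon>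
  proof -
    obtain \<delta> where "\<delta> > 0" "\<forall>z'\<in>B. norm (z' - z) < \<delta> \<longrightarrow> inner v (z' - z) \<le> \<epsilon> * norm (z' - z)"
      using v \<open>\<epsilon> > 0\<close> unfolding regular_normal_cone_def by blast
    then show ?thesis
      using assms by (intro exI[of _ "min \<delta> e"]) (auto simp: subset_iff dist_norm norm_minus_commute)
  qed
  then show "v \<in> regular_normal_cone A z" unfolding regular_normal_cone_def using assms(1) by blast
qed

lemma regular_normal_cone_cong_local:
  assumes "e > 0" "A \<inter> ball z e = B \<inter> ball z e"
  shows "regular_normal_cone A z = regular_normal_cone B z"
proof (cases "z \<in> A")
  case True
  then have "z \<in> B" using assms by (metis IntD1 IntI centre_in_ball)
  then show ?thesis using regular_normal_cone_antimono_local True assms by (metis Int_lower1 subset_antisym)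
next
  case False
  then have "z \<notin> B" using assms by (metis IntD1 IntI centre_in_ball)
  then show ?thesis using False by (simp add: regular_normal_cone_def)
qed

lemma regular_normal_cone_translation:
  "regular_normal_cone ((+) p ` T) (p + w) = regular_normal_cone T w"
proof -
  have "(\<forall>z'\<in>(+) p ` T. Q (z' - (p + w))) \<longleftrightarrow> (\<forall>z'\<in>T. Q (z' - w))" for Q :: "'a \<Rightarrow> bool"
    by (auto simp: algebra_simps)
  then show ?thesis unfolding regular_normal_cone_def by auto
qed

lemma regular_normal_cone_local_cone:
  assumes "local_cone D p T"
  obtains \<epsilon> where "\<epsilon> > 0" "\<And>w. norm w < \<epsilon> \<Longrightarrow> regular_normal_cone D (p + w) = regular_normal_cone T w"
proof -
  obtain \<epsilon> where \<epsilon>: "\<epsilon> > 0" "\<And>w. norm w < \<epsilon> \<Longrightarrow> p + w \<in> D \<longleftrightarrow> w \<in> T"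
    using assms unfolding local_cone_def by blast
  have "regular_normal_cone D (p + w) = regular_normal_cone T w" if w: "norm w < \<epsilon>" for w
  proof -
    have "z \<in> D \<longleftrightarrow> z \<in> (+) p ` T" if z: "z \<in> ball (p + w) (\<epsilon> - norm w)" for z
    proof -
      have "norm (z - p) \<le> norm (z - (p + w)) + norm w"
        by (metis add_diff_cancel_left' diff_add_cancel diff_diff_add norm_triangle_ineq)
      then have "norm (z - p) < \<epsilon>" using z by (simp add: dist_norm norm_minus_commute)
      moreover have "z \<in> (+) p ` T \<longleftrightarrow> z - p \<in> T" by force
      ultimately show ?thesis using \<epsilon>(2)[of "z - p"] by simp
    qed
    then have "D \<inter> ball (p + w) (\<epsilon> - norm w) = (+) p ` T \<inter> ball (p + w) (\<epsilon> - norm w)"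
      by blast
    then show ?thesis
      using regular_normal_cone_cong_local regular_normal_cone_translation w by (metis diff_gt_0_iff_gt)
  qed
  then show ?thesis using that \<epsilon>(1) by blast
qed

lemma regular_normal_cone_scaleR_subset:
  fixes T :: "'a::real_inner set"
  assumes "conic T" "r > 0"
  shows "regular_normal_cone T w \<subseteq> regular_normal_cone T (r *\<^sub>R w)"
proof
  fix v assume v: "v \<in> regular_normal_cone T w"
  have "\<exists>\<delta>>0. \<forall>z\<in>T. norm (z - r *\<^sub>R w) < \<delta> \<longrightarrow> inner v (z - r *\<^sub>R w) \<le> e * norm (z - r *\<^sub>R w)"
    if "e > 0" for e
  proof -
    obtain \<delta> where \<delta>: "\<delta> > 0" "\<forall>z\<in>T. norm (z - w) < \<delta> \<longrightarrow> inner v (z - w) \<le> e * norm (z - w)"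
      using v \<open>e > 0\<close> unfolding regular_normal_cone_def by blast
    show ?thesis
    proof (intro exI[of _ "r * \<delta>"] conjI ballI impI)
      show "0 < r * \<delta>" using assms \<delta> by simp
      fix z assume z: "z \<in> T" "norm (z - r *\<^sub>R w) < r * \<delta>"
      have eq: "z - r *\<^sub>R w = r *\<^sub>R (inverse r *\<^sub>R z - w)" using assms by (simp add: algebra_simps)
      have "inverse r *\<^sub>R z \<in> T" using assms z conicD by (metis inverse_nonnegative_iff_nonnegative less_le)
      moreover have "norm (inverse r *\<^sub>R z - w) < \<delta>" using z(2) assms unfolding eq by simp
      ultimately have "inner v (inverse r *\<^sub>R z - w) \<le> e * norm (inverse r *\<^sub>R z - w)" using \<delta> by blast
      then have "r * inner v (inverse r *\<^sub>R z - w) \<le> r * (e * norm (inverse r *\<^sub>R z - w))"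
        using assms by simp
      also have "\<dots> = e * norm (z - r *\<^sub>R w)" unfolding eq using assms by simp
      finally show "inner v (z - r *\<^sub>R w) \<le> e * norm (z - r *\<^sub>R w)" unfolding eq by simp
    qed
  qed
  moreover have "r *\<^sub>R w \<in> T"
    using v assms conicD less_imp_le unfolding regular_normal_cone_def by blast
  ultimately show "v \<in> regular_normal_cone T (r *\<^sub>R w)" unfolding regular_normal_cone_def by blast
qed

lemma regular_normal_cone_conic_scaleR:
  fixes T :: "'a::real_inner set"
  assumes "conic T" "r > 0"
  shows "regular_normal_cone T (r *\<^sub>R w) = regular_normal_cone T w"
  using regular_normal_cone_scaleR_subset[OF assms(1), of "inverse r" "r *\<^sub>R w"]
    regular_normal_cone_scaleR_subset[OF assms] assms(2) by auto

definition convex_normal_cone :: "'a::real_inner set \<Rightarrow> 'a \<Rightarrow> 'a set" where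
  "convex_normal_cone C w = {\<mu>. \<forall>x\<in>C. inner \<mu> (x - w) \<le> 0}"

lemma nonpos_if_le_all_pos_mult:
  fixes a c :: real
  assumes "\<And>e. e > 0 \<Longrightarrow> a \<le> e * c"
  shows "a \<le> 0"
proof (rule ccontr)
  assume "\<not> a \<le> 0"
  define e where "e = a / (2 * (\<bar>c\<bar> + 1))"
  have c1: "\<bar>c\<bar> + 1 > 0" by (simp add: add_nonneg_pos)
  then have "e > 0" using \<open>\<not> a \<le> 0\<close> by (simp add: e_def)
  have "a \<le> e * c" by (rule assms) fact
  also have "\<dots> < e * (\<bar>c\<bar> + 1)" using \<open>e > 0\<close> by (simp add: mult_strict_left_mono)
  also have "\<dots> = a / 2" using c1 by (simp add: e_def field_simps)
  finally show False using \<open>\<not> a \<le> 0\<close> by simp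
qed

lemma regular_normal_cone_convex:
  fixes C :: "'a::real_inner set"
  assumes "convex C" "w \<in> C"
  shows "regular_normal_cone C w = convex_normal_cone C w"
proof
  show "regular_normal_cone C w \<subseteq> convex_normal_cone C w"
  proof (clarsimp simp: convex_normal_cone_def)
    fix \<mu> x assume \<mu>: "\<mu> \<in> regular_normal_cone C w" and x: "x \<in> C"
    show "inner \<mu> (x - w) \<le> 0"
    proof (rule nonpos_if_le_all_pos_mult)
      fix e :: real assume "e > 0"
      then obtain \<delta> where \<delta>: "\<delta> > 0"
        "\<forall>z\<in>C. norm (z - w) < \<delta> \<longrightarrow> inner \<mu> (z - w) \<le> e * norm (z - w)"
        using \<mu> unfolding regular_normal_cone_def by blast
      define s where "s = min 1 (\<delta> / (2 * (norm (x - w) + 1)))"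
      have s: "0 < s" "s \<le> 1" using \<delta> by (auto simp: s_def add_nonneg_pos)
      have n1: "norm (x - w) + 1 > 0" by (simp add: add_nonneg_pos)
      have "s * norm (x - w) \<le> \<delta> / (2 * (norm (x - w) + 1)) * norm (x - w)"
        by (intro mult_right_mono) (simp_all add: s_def)
      also have "\<dots> < \<delta>" using \<delta>(1) n1 by (simp add: field_simps add_pos_nonneg)
      finally have "norm (s *\<^sub>R (x - w)) < \<delta>" using s by simp
      moreover have "w + s *\<^sub>R (x - w) \<in> C"
        using convexD_alt[OF assms x, of s] s by (simp add: algebra_simps)
      ultimately have "inner \<mu> (s *\<^sub>R (x - w)) \<le> e * norm (s *\<^sub>R (x - w))"
        using \<delta>(2) by fastforce
      then have "s * inner \<mu> (x - w) \<le> s * (e * norm (x - w))"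
        using s by (simp add: algebra_simps flip: scaleR_diff_right)
      then show "inner \<mu> (x - w) \<le> e * norm (x - w)"
        using s by simp
    qed
  qed
  show "convex_normal_cone C w \<subseteq> regular_normal_cone C w"
    using assms(2) unfolding convex_normal_cone_def regular_normal_cone_def
    by (force intro: order_trans[OF _ mult_nonneg_nonneg])
qed

lemma regular_normal_cone_Union_convex:
  fixes \<C> :: "'a::real_inner set set"
  assumes "finite \<C>" "\<And>C. C \<in> \<C> \<Longrightarrow> closed C \<and> convex C" "w \<in> \<Union>\<C>"
  shows "regular_normal_cone (\<Union>\<C>) w = (\<Inter>C\<in>{C\<in>\<C>. w \<in> C}. convex_normal_cone C w)"
proof
  show "regular_normal_cone (\<Union>\<C>) w \<subseteq> (\<Inter>C\<in>{C\<in>\<C>. w \<in> C}. convex_normal_cone C w)"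
  proof (intro INT_greatest)
    fix C assume C: "C \<in> {C\<in>\<C>. w \<in> C}"
    then have "regular_normal_cone (\<Union>\<C>) w \<subseteq> regular_normal_cone C w"
      by (intro regular_normal_cone_antimono_local[of w C 1]) auto
    also have "\<dots> = convex_normal_cone C w"
      using C assms(2) by (intro regular_normal_cone_convex) auto
    finally show "regular_normal_cone (\<Union>\<C>) w \<subseteq> convex_normal_cone C w" .
  qed
next
  let ?A = "\<Union>{C\<in>\<C>. w \<in> C}" and ?B = "\<Union>{C\<in>\<C>. w \<notin> C}"
  have "closed ?B" using assms(1,2) by (intro closed_Union) auto
  moreover have "w \<notin> ?B" by blast
  ultimately obtain r where "r > 0" "ball w r \<subseteq> - ?B"
    using open_contains_ball[of "- ?B"] by blast
  then have "\<Union>\<C> \<inter> ball w r \<subseteq> ?A" by blast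
  then have "regular_normal_cone ?A w \<subseteq> regular_normal_cone (\<Union>\<C>) w"
    by (rule regular_normal_cone_antimono_local[OF assms(3) \<open>r > 0\<close>])
  moreover have "(\<Inter>C\<in>{C\<in>\<C>. w \<in> C}. convex_normal_cone C w) \<subseteq> regular_normal_cone ?A w"
  proof
    fix \<mu> assume \<mu>: "\<mu> \<in> (\<Inter>C\<in>{C\<in>\<C>. w \<in> C}. convex_normal_cone C w)"
    have "inner \<mu> (z - w) \<le> e * norm (z - w)" if "z \<in> ?A" "e > 0" for z e
    proof -
      have "inner \<mu> (z - w) \<le> 0" using \<mu> that(1) by (auto simp: convex_normal_cone_def)
      also have "0 \<le> e * norm (z - w)" using that(2) by simp
      finally show ?thesis .
    qed
    moreover have "w \<in> ?A" using assms(3) by blast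
    ultimately show "\<mu> \<in> regular_normal_cone ?A w"
      unfolding regular_normal_cone_def by (auto intro: exI[of _ 1])
  qed
  ultimately show "(\<Inter>C\<in>{C\<in>\<C>. w \<in> C}. convex_normal_cone C w) \<subseteq> regular_normal_cone (\<Union>\<C>) w"
    by (rule order_trans[rotated])
qed

definition polar_face :: "'a::real_inner set \<Rightarrow> 'a set \<Rightarrow> 'a set" where
  "polar_face S J = {\<mu>. (\<forall>s\<in>S. inner \<mu> s \<le> 0) \<and> (\<forall>s\<in>J. inner \<mu> s = 0)}"

lemma convex_normal_cone_convex_cone_hull_subset_polar_face:
  fixes S :: "'a::euclidean_space set"
  assumes S: "finite S" and a: "\<forall>s\<in>S. 0 \<le> a s" and w: "w = (\<Sum>s\<in>S. a s *\<^sub>R s)"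
  shows "convex_normal_cone (convex_cone hull S) w \<subseteq> polar_face S {s\<in>S. a s > 0}"
proof
  fix \<mu> assume \<mu>: "\<mu> \<in> convex_normal_cone (convex_cone hull S) w"
  have "w \<in> convex_cone hull S"
    using nonneg_combination_mem_convex_cone_hull[OF S subset_refl a] w by simp
  then have "w + s \<in> convex_cone hull S" if "s \<in> S" for s
    using that by (simp add: convex_cone_hull_add hull_inc)
  then have \<mu>s: "inner \<mu> s \<le> 0" if "s \<in> S" for s
    using \<mu> that unfolding convex_normal_cone_def by force
  have nonneg: "0 \<le> - (a s * inner \<mu> s)" if "s \<in> S" for s
    using a \<mu>s that by (simp add: mult_nonneg_nonpos)
  have "0 \<le> inner \<mu> w"
    using \<mu> convex_cone_hull_contains_0 unfolding convex_normal_cone_def by force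
  also have "inner \<mu> w = - (\<Sum>s\<in>S. - (a s * inner \<mu> s))"
    by (simp add: w inner_sum_right sum_negf)
  finally have "(\<Sum>s\<in>S. - (a s * inner \<mu> s)) = 0"
    using sum_nonneg[of S "\<lambda>s. - (a s * inner \<mu> s)"] nonneg by force
  then have "a s * inner \<mu> s = 0" if "s \<in> S" for s
    using sum_nonneg_eq_0_iff[OF S nonneg] that by simp
  then have "inner \<mu> s = 0" if "s \<in> S" "a s > 0" for s
    using that by (metis less_irrefl mult_eq_0_iff)
  then show "\<mu> \<in> polar_face S {s\<in>S. a s > 0}"
    using \<mu>s unfolding polar_face_def by blast
qed

lemma polar_face_subset_convex_normal_cone_convex_cone_hull:
  fixes S :: "'a::euclidean_space set"
  assumes S: "finite S" and a: "\<forall>s\<in>S. 0 \<le> a s" and w: "w = (\<Sum>s\<in>S. a s *\<^sub>R s)"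
  shows "polar_face S {s\<in>S. a s > 0} \<subseteq> convex_normal_cone (convex_cone hull S) w"
proof
  fix \<mu> assume \<mu>: "\<mu> \<in> polar_face S {s\<in>S. a s > 0}"
  have "inner \<mu> w = (\<Sum>s\<in>S. a s * inner \<mu> s)" by (simp add: w inner_sum_right)
  also have "\<dots> = 0"
  proof (intro sum.neutral ballI)
    fix s assume "s \<in> S"
    then show "a s * inner \<mu> s = 0"
      using \<mu> a unfolding polar_face_def by (cases "a s > 0") auto
  qed
  finally have \<mu>w: "inner \<mu> w = 0" .
  have "inner \<mu> x \<le> 0" if x: "x \<in> convex_cone hull S" for x
  proof -
    obtain b where b: "\<forall>s\<in>S. 0 \<le> b s" "x = (\<Sum>s\<in>S. b s *\<^sub>R s)"
      using convex_cone_hull_finite_nonneg_combination[OF S x] by blast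
    have "inner \<mu> x = (\<Sum>s\<in>S. b s * inner \<mu> s)" by (simp add: b(2) inner_sum_right)
    also have "\<dots> \<le> 0"
      using b(1) \<mu> unfolding polar_face_def by (intro sum_nonpos) (simp add: mult_nonneg_nonpos)
    finally show ?thesis .
  qed
  then show "\<mu> \<in> convex_normal_cone (convex_cone hull S) w"
    unfolding convex_normal_cone_def using \<mu>w by (simp add: inner_diff_right)
qed

lemma convex_normal_cone_convex_cone_hull_eq_polar_face:
  fixes S :: "'a::euclidean_space set"
  assumes "finite S" "\<forall>s\<in>S. 0 \<le> a s" "w = (\<Sum>s\<in>S. a s *\<^sub>R s)"
  shows "convex_normal_cone (convex_cone hull S) w = polar_face S {s\<in>S. a s > 0}"
  using convex_normal_cone_convex_cone_hull_subset_polar_face[OF assms]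
    polar_face_subset_convex_normal_cone_convex_cone_hull[OF assms] by blast

lemma polyhedron_polar_face:
  fixes S :: "'a::euclidean_space set"
  assumes "finite S" "J \<subseteq> S"
  shows "polyhedron (polar_face S J)"
proof -
  have "polar_face S J = (\<Inter>s\<in>S. {\<mu>. s \<bullet> \<mu> \<le> 0}) \<inter> (\<Inter>s\<in>J. {\<mu>. s \<bullet> \<mu> = 0})"
    unfolding polar_face_def by (auto simp: inner_commute)
  moreover have "finite J" using assms finite_subset by blast
  ultimately show ?thesis
    using assms(1)
    by (simp only:) (intro polyhedron_Int polyhedron_Inter; auto simp: polyhedron_halfspace_le polyhedron_hyperplane)
qed

definition polar_face_intersections :: "'a::real_inner set set \<Rightarrow> 'a set set" where
  "polar_face_intersections \<S> = Inter ` Pow (\<Union>S\<in>\<S>. polar_face S ` Pow S)"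

lemma finite_polar_face_intersections:
  assumes "finite \<S>" "\<forall>S\<in>\<S>. finite S"
  shows "finite (polar_face_intersections \<S>)"
  unfolding polar_face_intersections_def using assms by auto

lemma polar_face_intersections_polyhedral_cone:
  fixes \<S> :: "'a::euclidean_space set set"
  assumes "finite \<S>" "\<forall>S\<in>\<S>. finite S" "Q \<in> polar_face_intersections \<S>"
  shows "polyhedron Q" "conic Q" "0 \<in> Q"
proof -
  obtain \<B> where \<B>: "\<B> \<subseteq> (\<Union>S\<in>\<S>. polar_face S ` Pow S)" "Q = \<Inter>\<B>"
    using assms(3) unfolding polar_face_intersections_def by blast
  have "finite (\<Union>S\<in>\<S>. polar_face S ` Pow S)" using assms(1,2) by simp
  then have "finite \<B>" using \<B>(1) by (rule finite_subset[rotated])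
  moreover have "polyhedron P \<and> conic P \<and> 0 \<in> P" if P: "P \<in> \<B>" for P
  proof -
    obtain S J where "S \<in> \<S>" "J \<subseteq> S" "P = polar_face S J" using P \<B>(1) by blast
    then show ?thesis
      using assms(2) polyhedron_polar_face[of S J]
      by (auto simp: polar_face_def conic_def mult_nonneg_nonpos)
  qed
  ultimately show "polyhedron Q" "conic Q" "0 \<in> Q"
    using \<B>(2) by (auto intro: conic_Inter)
qed

lemma regular_normal_cone_mem_polar_face_intersections:
  fixes \<S> :: "'a::euclidean_space set set"
  assumes "finite \<S>" "\<forall>S\<in>\<S>. finite S" "w \<in> (\<Union>S\<in>\<S>. convex_cone hull S)"
  shows "regular_normal_cone (\<Union>S\<in>\<S>. convex_cone hull S) w \<in> polar_face_intersections \<S>"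
proof -
  let ?\<C> = "(hull) convex_cone ` \<S>"
  have "convex_normal_cone C w \<in> (\<Union>S\<in>\<S>. polar_face S ` Pow S)" if C: "C \<in> {C\<in>?\<C>. w \<in> C}" for C
  proof -
    obtain S where S: "S \<in> \<S>" "C = convex_cone hull S" "w \<in> convex_cone hull S" using C by blast
    have "finite S" using assms(2) S(1) by blast
    then obtain a where a: "\<forall>s\<in>S. 0 \<le> a s" "w = (\<Sum>s\<in>S. a s *\<^sub>R s)"
      using convex_cone_hull_finite_nonneg_combination S(3) by blast
    have "convex_normal_cone C w = polar_face S {s\<in>S. 0 < a s}"
      unfolding S(2) by (rule convex_normal_cone_convex_cone_hull_eq_polar_face[OF \<open>finite S\<close> a])
    then show ?thesis using S(1) by blast
  qed
  moreover have "regular_normal_cone (\<Union>?\<C>) w = (\<Inter>C\<in>{C\<in>?\<C>. w \<in> C}. convex_normal_cone C w)"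
  proof (rule regular_normal_cone_Union_convex)
    show "finite ?\<C>" using assms(1) by blast
    show "closed C \<and> convex C" if "C \<in> ?\<C>" for C
      using that assms(2) closed_convex_cone_hull convex_convex_cone_hull by blast
  qed (use assms(3) in blast)
  ultimately show ?thesis unfolding polar_face_intersections_def by blast
qed

lemma mem_gph_diff_image:
  fixes g :: "'a \<Rightarrow> 'b::ab_group_add"
  shows "(x, y) \<in> gph (\<lambda>x. (\<lambda>d. g x - d) ` D) \<longleftrightarrow> g x - y \<in> D"
proof -
  have "y = g x - d \<longleftrightarrow> d = g x - y" for d by (auto simp: algebra_simps)
  then have "y \<in> (\<lambda>d. g x - d) ` D \<longleftrightarrow> g x - y \<in> D" by (simp add: image_iff)
  then show ?thesis unfolding gph_def by simp
qed

lemma gph_diff_image_eq_vimage: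
  fixes g :: "'a \<Rightarrow> 'b::ab_group_add"
  shows "gph (\<lambda>x. (\<lambda>d. g x - d) ` D) = (\<lambda>(x, y). g x - y) -` D"
proof (rule set_eqI)
  fix p :: "'a \<times> 'b"
  show "p \<in> gph (\<lambda>x. (\<lambda>d. g x - d) ` D) \<longleftrightarrow> p \<in> (\<lambda>(x, y). g x - y) -` D"
    by (cases p) (simp add: mem_gph_diff_image)
qed

lemma has_derivative_dir_diff_quotient:
  fixes f :: "'a::real_normed_vector \<Rightarrow> 'b::real_normed_vector"
  assumes f: "(f has_derivative f') (at x0)" and xk: "xk \<longlonglongrightarrow> x0"
    and dir: "(\<lambda>k. (1 / norm (xk k - x0)) *\<^sub>R (xk k - x0)) \<longlonglongrightarrow> u"
  shows "(\<lambda>k. (1 / norm (xk k - x0)) *\<^sub>R (f (xk k) - f x0)) \<longlonglongrightarrow> f' u"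
proof -
  have lin: "linear f'" using f has_derivative_linear by blast
  let ?r = "\<lambda>k. (1 / norm (xk k - x0)) *\<^sub>R (f (xk k) - f x0 - f' (xk k - x0))"
  have "?r \<longlonglongrightarrow> 0"
    unfolding LIMSEQ_iff
  proof (intro allI impI)
    fix e :: real assume "e > 0"
    then obtain \<delta> where \<delta>: "\<delta> > 0"
      "\<And>y. norm (y - x0) < \<delta> \<Longrightarrow> norm (f y - f x0 - f' (y - x0)) \<le> (e / 2) * norm (y - x0)"
      using f unfolding has_derivative_at_alt by (meson half_gt_zero)
    obtain N where N: "\<forall>n\<ge>N. norm (xk n - x0) < \<delta>" using xk \<delta>(1) unfolding LIMSEQ_iff by blast
    show "\<exists>N. \<forall>n\<ge>N. norm (?r n - 0) < e"
    proof (intro exI[of _ N] allI impI)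
      fix n assume "n \<ge> N"
      then have "norm (?r n - 0) \<le> e / 2"
        using \<delta>(2)[of "xk n"] N \<open>e > 0\<close>
        by (cases "xk n = x0") (simp_all add: divide_le_eq mult.commute)
      then show "norm (?r n - 0) < e" using \<open>e > 0\<close> by linarith
    qed
  qed
  moreover have "(\<lambda>k. f' ((1 / norm (xk k - x0)) *\<^sub>R (xk k - x0))) \<longlonglongrightarrow> f' u"
    using bounded_linear.tendsto[OF has_derivative_bounded_linear[OF f] dir] .
  ultimately have "(\<lambda>k. ?r k + f' ((1 / norm (xk k - x0)) *\<^sub>R (xk k - x0))) \<longlonglongrightarrow> 0 + f' u"
    by (rule tendsto_add)
  moreover have "?r k + f' ((1 / norm (xk k - x0)) *\<^sub>R (xk k - x0))
      = (1 / norm (xk k - x0)) *\<^sub>R (f (xk k) - f x0)" for k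
    unfolding linear_cmul[OF lin] by (simp add: algebra_simps)
  ultimately show ?thesis by simp
qed

lemma regular_normal_cone_tangent_cone_inner_nonpos:
  assumes "v \<in> regular_normal_cone S z" "d \<in> tangent_cone S z"
  shows "inner v d \<le> 0"
proof (rule nonpos_if_le_all_pos_mult)
  fix e :: real assume "e > 0"
  obtain t dk where t: "\<forall>k. t k > 0" "t \<longlonglongrightarrow> 0" "dk \<longlonglongrightarrow> d" "\<forall>k. z + t k *\<^sub>R dk k \<in> S"
    using assms(2) unfolding tangent_cone_def by blast
  obtain \<delta> where \<delta>: "\<delta> > 0" "\<forall>z'\<in>S. norm (z' - z) < \<delta> \<longrightarrow> inner v (z' - z) \<le> e * norm (z' - z)"
    using assms(1) \<open>e > 0\<close> unfolding regular_normal_cone_def by blast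
  have "(\<lambda>k. t k *\<^sub>R dk k) \<longlonglongrightarrow> 0" using tendsto_scaleR[OF t(2) t(3)] by simp
  then have "eventually (\<lambda>k. norm (t k *\<^sub>R dk k) < \<delta>) sequentially"
    using order_tendstoD(2)[OF tendsto_norm_zero \<delta>(1)] by blast
  then have "eventually (\<lambda>k. 0 \<le> e * norm (dk k) - inner v (dk k)) sequentially"
  proof (rule eventually_mono)
    fix k assume "norm (t k *\<^sub>R dk k) < \<delta>"
    then have "t k * inner v (dk k) \<le> t k * (e * norm (dk k))"
      using \<delta>(2) t(1,4) by (fastforce simp: algebra_simps abs_of_pos)
    then show "0 \<le> e * norm (dk k) - inner v (dk k)" using t(1) by simp
  qed
  then obtain N where "\<forall>n\<ge>N. 0 \<le> e * norm (dk n) - inner v (dk n)"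
    unfolding eventually_sequentially by blast
  moreover have "(\<lambda>k. e * norm (dk k) - inner v (dk k)) \<longlonglongrightarrow> e * norm d - inner v d"
    by (intro tendsto_intros t(3))
  ultimately have "0 \<le> e * norm d - inner v d"
    by (intro LIMSEQ_le_const) blast+
  then show "inner v d \<le> e * norm d" by simp
qed

lemma has_derivative_at_estimates:
  assumes "(F has_derivative F') (at z)"
  obtains L where "L > 0"
    "\<And>e. e > 0 \<Longrightarrow> \<exists>\<delta>>0. \<forall>z'. norm (z' - z) < \<delta> \<longrightarrow>
        norm (F z' - F z - F' (z' - z)) \<le> e * norm (z' - z) \<and> norm (F z' - F z) \<le> L * norm (z' - z)"
proof -
  obtain K where K: "K > 0" "\<And>x. norm (F' x) \<le> norm x * K"
    using bounded_linear.pos_bounded[OF has_derivative_bounded_linear[OF assms]] by blast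
  have "\<exists>\<delta>>0. \<forall>z'. norm (z' - z) < \<delta> \<longrightarrow>
      norm (F z' - F z - F' (z' - z)) \<le> e * norm (z' - z) \<and> norm (F z' - F z) \<le> (K + 1) * norm (z' - z)"
    if "e > 0" for e
  proof -
    obtain \<delta> where "\<delta> > 0"
      and \<delta>: "\<And>z'. norm (z' - z) < \<delta> \<Longrightarrow> norm (F z' - F z - F' (z' - z)) \<le> min e 1 * norm (z' - z)"
      using assms \<open>e > 0\<close> unfolding has_derivative_at_alt by (metis min_less_iff_conj zero_less_one)
    have "norm (F z' - F z) \<le> (K + 1) * norm (z' - z)" if "norm (z' - z) < \<delta>" for z'
    proof -
      have "norm (F z' - F z) \<le> norm (F' (z' - z)) + norm (F z' - F z - F' (z' - z))"
        using norm_triangle_ineq[of "F' (z' - z)" "F z' - F z - F' (z' - z)"] by simp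
      also have "\<dots> \<le> norm (z' - z) * K + 1 * norm (z' - z)"
        using K(2) \<delta>[OF that] mult_right_mono[of "min e 1" 1 "norm (z' - z)"] by (intro add_mono) auto
      finally show ?thesis by (simp add: algebra_simps)
    qed
    moreover have "min e 1 * norm (z' - z) \<le> e * norm (z' - z)" for z'
      by (simp add: mult_right_mono)
    ultimately show ?thesis using \<open>\<delta> > 0\<close> \<delta> order_trans by blast
  qed
  then show ?thesis using that[of "K + 1"] K(1) by simp
qed

lemma regular_normal_cone_vimage:
  fixes F :: "'a::euclidean_space \<Rightarrow> 'b::euclidean_space"
  assumes F: "(F has_derivative F') (at z)" and \<mu>: "\<mu> \<in> regular_normal_cone D (F z)"
  shows "adjoint F' \<mu> \<in> regular_normal_cone (F -` D) z"
proof -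
  have lin: "linear F'" using F has_derivative_linear by blast
  obtain L where L: "L > 0" "\<And>e. e > 0 \<Longrightarrow> \<exists>\<delta>>0. \<forall>z'. norm (z' - z) < \<delta> \<longrightarrow>
      norm (F z' - F z - F' (z' - z)) \<le> e * norm (z' - z) \<and> norm (F z' - F z) \<le> L * norm (z' - z)"
    using has_derivative_at_estimates[OF F] by blast
  have "\<exists>\<delta>>0. \<forall>z'\<in>F -` D. norm (z' - z) < \<delta> \<longrightarrow> inner (adjoint F' \<mu>) (z' - z) \<le> e * norm (z' - z)"
    if "e > 0" for e
  proof -
    define e' where "e' = e / (L + norm \<mu>)"
    have "L + norm \<mu> > 0" using L(1) by (simp add: add_pos_nonneg)
    then have "e' > 0" using \<open>e > 0\<close> by (simp add: e'_def)
    obtain \<delta>1 where "\<delta>1 > 0"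
      and \<delta>1: "\<forall>y\<in>D. norm (y - F z) < \<delta>1 \<longrightarrow> inner \<mu> (y - F z) \<le> e' * norm (y - F z)"
      using \<mu> \<open>e' > 0\<close> unfolding regular_normal_cone_def by blast
    obtain \<delta>2 where "\<delta>2 > 0" and \<delta>2: "\<forall>z'. norm (z' - z) < \<delta>2 \<longrightarrow>
        norm (F z' - F z - F' (z' - z)) \<le> e' * norm (z' - z) \<and> norm (F z' - F z) \<le> L * norm (z' - z)"
      using L(2)[OF \<open>e' > 0\<close>] by blast
    have "inner (adjoint F' \<mu>) (z' - z) \<le> e * norm (z' - z)"
      if z': "F z' \<in> D" "norm (z' - z) < min \<delta>2 (\<delta>1 / L)" for z'
    proof -
      let ?n = "norm (z' - z)" and ?r = "F z' - F z - F' (z' - z)"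
      have lip: "norm (F z' - F z) \<le> L * ?n" and rem: "norm ?r \<le> e' * ?n"
        using \<delta>2 z'(2) by auto
      have "L * ?n < \<delta>1" using z'(2) L(1) by (simp add: field_simps)
      then have "inner \<mu> (F z' - F z) \<le> e' * norm (F z' - F z)"
        using \<delta>1 z'(1) lip by auto
      also have "\<dots> \<le> e' * (L * ?n)"
        using lip \<open>e' > 0\<close> by (intro mult_left_mono) auto
      finally have 1: "inner \<mu> (F z' - F z) \<le> e' * (L * ?n)" .
      have "- inner \<mu> ?r \<le> norm \<mu> * norm ?r"
        using norm_cauchy_schwarz[of "- \<mu>"] by simp
      also have "\<dots> \<le> norm \<mu> * (e' * ?n)"
        using rem by (intro mult_left_mono) auto
      finally have 2: "- inner \<mu> ?r \<le> norm \<mu> * (e' * ?n)" .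
      have "inner (adjoint F' \<mu>) (z' - z) = inner \<mu> (F z' - F z) - inner \<mu> ?r"
        by (simp add: adjoint_works[OF lin] inner_diff_right inner_commute)
      also have "\<dots> \<le> e' * (L + norm \<mu>) * ?n" using 1 2 by (simp add: algebra_simps)
      also have "\<dots> = e * ?n" using \<open>L + norm \<mu> > 0\<close> by (simp add: e'_def)
      finally show ?thesis .
    qed
    then show ?thesis using \<open>\<delta>1 > 0\<close> \<open>\<delta>2 > 0\<close> L(1) by (intro exI[of _ "min \<delta>2 (\<delta>1 / L)"]) auto
  qed
  moreover have "z \<in> F -` D" using \<mu> unfolding regular_normal_cone_def by blast
  ultimately show ?thesis unfolding regular_normal_cone_def by blast
qed

lemma has_derivative_diff_quotient_along:
  fixes f :: "'a::real_normed_vector \<Rightarrow> 'b::real_normed_vector"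
  assumes f: "(f has_derivative f') (at x)" and t: "\<forall>k. t k > 0" "t \<longlonglongrightarrow> 0"
  shows "(\<lambda>k. (1 / t k) *\<^sub>R (f (x + t k *\<^sub>R h) - f x)) \<longlonglongrightarrow> f' h"
proof (cases "h = 0")
  case True
  then show ?thesis using linear_0[OF has_derivative_linear[OF f]] by simp
next
  case False
  let ?n = "\<lambda>k. norm (x + t k *\<^sub>R h - x)"
  have "(\<lambda>k. x + t k *\<^sub>R h) \<longlonglongrightarrow> x"
    using tendsto_add[OF tendsto_const tendsto_scaleR[OF t(2) tendsto_const]] by simp
  moreover have "(\<lambda>k. (1 / ?n k) *\<^sub>R (x + t k *\<^sub>R h - x)) = (\<lambda>k. (1 / norm h) *\<^sub>R h)"
  proof
    fix k
    show "(1 / ?n k) *\<^sub>R (x + t k *\<^sub>R h - x) = (1 / norm h) *\<^sub>R h"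
      using t(1)[rule_format, of k] by (simp add: abs_of_pos)
  qed
  then have "(\<lambda>k. (1 / ?n k) *\<^sub>R (x + t k *\<^sub>R h - x)) \<longlonglongrightarrow> (1 / norm h) *\<^sub>R h"
    by (simp only: tendsto_const)
  ultimately have "(\<lambda>k. (1 / ?n k) *\<^sub>R (f (x + t k *\<^sub>R h) - f x)) \<longlonglongrightarrow> f' ((1 / norm h) *\<^sub>R h)"
    by (rule has_derivative_dir_diff_quotient[OF f])
  then have "(\<lambda>k. norm h *\<^sub>R ((1 / ?n k) *\<^sub>R (f (x + t k *\<^sub>R h) - f x)))
      \<longlonglongrightarrow> norm h *\<^sub>R f' ((1 / norm h) *\<^sub>R h)"
    by (intro tendsto_scaleR tendsto_const)
  moreover have "norm h *\<^sub>R f' ((1 / norm h) *\<^sub>R h) = f' h"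
    using False by (simp add: linear_cmul[OF has_derivative_linear[OF f]])
  moreover have "(\<lambda>k. norm h *\<^sub>R ((1 / ?n k) *\<^sub>R (f (x + t k *\<^sub>R h) - f x)))
      = (\<lambda>k. (1 / t k) *\<^sub>R (f (x + t k *\<^sub>R h) - f x))"
  proof
    fix k
    show "norm h *\<^sub>R ((1 / ?n k) *\<^sub>R (f (x + t k *\<^sub>R h) - f x)) = (1 / t k) *\<^sub>R (f (x + t k *\<^sub>R h) - f x)"
      using False t(1)[rule_format, of k] by (simp add: abs_of_pos)
  qed
  ultimately show ?thesis by metis
qed

lemma tangent_cone_gph_diff_image:
  assumes g: "(g has_derivative G) (at x)" and xy: "(x, y) \<in> gph (\<lambda>x. (\<lambda>d. g x - d) ` D)"
  shows "(h, G h) \<in> tangent_cone (gph (\<lambda>x. (\<lambda>d. g x - d) ` D)) (x, y)"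
proof -
  define t where "t k = inverse (real (Suc k))" for k
  have t: "\<forall>k. t k > 0" "t \<longlonglongrightarrow> 0"
    unfolding t_def by (simp, rule LIMSEQ_inverse_real_of_nat)
  define dk where "dk k = (h, (1 / t k) *\<^sub>R (g (x + t k *\<^sub>R h) - g x))" for k
  have "dk \<longlonglongrightarrow> (h, G h)"
    unfolding dk_def by (intro tendsto_Pair tendsto_const has_derivative_diff_quotient_along[OF g t])
  moreover have "(x, y) + t k *\<^sub>R dk k \<in> gph (\<lambda>x. (\<lambda>d. g x - d) ` D)" for k
    using xy t(1)[rule_format, of k] by (simp add: dk_def mem_gph_diff_image)
  ultimately show ?thesis unfolding tangent_cone_def using xy t by blast
qed

lemma regular_normal_cone_gph_diff_image:
  fixes g :: "'a::euclidean_space \<Rightarrow> 'b::euclidean_space"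
  assumes g: "(g has_derivative G) (at x)" and \<mu>: "\<mu> \<in> regular_normal_cone D (g x - y)"
  shows "(adjoint G \<mu>, - \<mu>) \<in> regular_normal_cone (gph (\<lambda>x. (\<lambda>d. g x - d) ` D)) (x, y)"
proof -
  let ?F = "\<lambda>(x, y). g x - y" and ?F' = "\<lambda>(h, k). G h - k"
  have lin: "linear G" using g has_derivative_linear by blast
  have "(g has_derivative G) (at (fst (x, y)))" using g by simp
  then have "((\<lambda>p. g (fst p)) has_derivative (\<lambda>p. G (fst p))) (at (x, y))"
    by (rule has_derivative_compose[OF has_derivative_fst[OF has_derivative_ident]])
  then have "((\<lambda>p. g (fst p) - snd p) has_derivative (\<lambda>p. G (fst p) - snd p)) (at (x, y))"
    by (intro has_derivative_diff has_derivative_snd has_derivative_ident)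
  then have F: "(?F has_derivative ?F') (at (x, y))" by (simp add: case_prod_beta')
  have "inner (?F' p) q = inner p (adjoint G q, - q)" for p q
    by (cases p) (simp add: adjoint_works[OF lin] inner_diff_left inner_diff_right inner_commute)
  then have "adjoint ?F' = (\<lambda>q. (adjoint G q, - q))"
    by (intro adjoint_unique allI)
  moreover have "adjoint ?F' \<mu> \<in> regular_normal_cone (?F -` D) (x, y)"
    using regular_normal_cone_vimage[OF F] \<mu> by simp
  ultimately show ?thesis by (simp add: gph_diff_image_eq_vimage)
qed

lemma regular_coderiv_gph_diff_image:
  fixes g :: "'a::euclidean_space \<Rightarrow> 'b::euclidean_space"
  assumes g: "(g has_derivative G) (at x)"
    and xs: "(xs, - l) \<in> regular_normal_cone (gph (\<lambda>x. (\<lambda>d. g x - d) ` D)) (x, y)"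
  shows "l \<in> regular_normal_cone D (g x - y)" "xs = adjoint G l"
proof -
  let ?gph = "gph (\<lambda>x. (\<lambda>d. g x - d) ` D)"
  let ?A = "\<lambda>d. (x, g x - d)" and ?A' = "\<lambda>d::'b. (0::'a, - d)"
  have A: "(?A has_derivative ?A') (at (g x - y))"
    by (auto intro!: derivative_eq_intros)
  have "(xs, - l) \<in> regular_normal_cone ?gph (?A (g x - y))" using xs by simp
  from regular_normal_cone_vimage[OF A this]
  have "adjoint ?A' (xs, - l) \<in> regular_normal_cone (?A -` ?gph) (g x - y)" .
  moreover have "adjoint ?A' = (\<lambda>p. - snd p)"
    by (rule adjoint_unique) (simp add: inner_prod_def)
  then have "adjoint ?A' (xs, - l) = l" by simp
  moreover have "?A -` ?gph = D" by (auto simp: mem_gph_diff_image)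
  ultimately show "l \<in> regular_normal_cone D (g x - y)" by simp
  have lin: "linear G" using g has_derivative_linear by blast
  have "(x, y) \<in> ?gph" using xs unfolding regular_normal_cone_def by blast
  then have le: "inner (xs - adjoint G l) h \<le> 0" for h
    using regular_normal_cone_tangent_cone_inner_nonpos[OF xs tangent_cone_gph_diff_image[OF g]]
    by (simp add: adjoint_works[OF lin] inner_diff_left inner_diff_right inner_commute)
  have "inner (xs - adjoint G l) (xs - adjoint G l) \<le> 0" by (rule le)
  then show "xs = adjoint G l" by (metis eq_iff_diff_eq_0 inner_gt_zero_iff not_le)
qed

lemma linear_blinfun_apply: "linear (blinfun_apply F)"
  by (rule bounded_linear.linear[OF blinfun.bounded_linear_right])

lemma adjoint_blinfun_eq_sum:
  fixes F :: "'a::euclidean_space \<Rightarrow>\<^sub>L 'b::euclidean_space"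
  shows "adjoint (blinfun_apply F) y = (\<Sum>b\<in>Basis. inner (F b) y *\<^sub>R b)"
  by (subst euclidean_representation[symmetric])
    (simp add: inner_commute[of _ b for b] adjoint_works[OF linear_blinfun_apply])

lemma tendsto_adjoint_blinfun:
  fixes F :: "'c \<Rightarrow> 'a::euclidean_space \<Rightarrow>\<^sub>L 'b::euclidean_space"
  assumes "(F \<longlongrightarrow> F0) net" "(l \<longlongrightarrow> l0) net"
  shows "((\<lambda>k. adjoint (blinfun_apply (F k)) (l k)) \<longlongrightarrow> adjoint (blinfun_apply F0) l0) net"
  unfolding adjoint_blinfun_eq_sum
  by (intro tendsto_sum tendsto_scaleR tendsto_inner blinfun.tendsto assms tendsto_const)

lemma adjoint_blinfun_linear_combination:
  fixes F G H :: "'a::euclidean_space \<Rightarrow>\<^sub>L 'b::euclidean_space"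
  shows "adjoint (blinfun_apply (F - G - c *\<^sub>R H)) y
    = adjoint (blinfun_apply F) y - adjoint (blinfun_apply G) y - c *\<^sub>R adjoint (blinfun_apply H) y"
  unfolding adjoint_blinfun_eq_sum
  by (simp add: blinfun.diff_left blinfun.scaleR_left inner_diff_left scaleR_left_diff_distrib
      sum_subtractf scaleR_sum_right)

lemma norm_adjoint_blinfun_le:
  fixes F :: "'a::euclidean_space \<Rightarrow>\<^sub>L 'b::euclidean_space"
  shows "norm (adjoint (blinfun_apply F) y) \<le> norm F * norm y"
proof -
  let ?a = "adjoint (blinfun_apply F) y"
  have "norm ?a * norm ?a = inner (F ?a) y"
    by (simp add: adjoint_works[OF linear_blinfun_apply, symmetric] power2_eq_square[symmetric] power2_norm_eq_inner)
  also have "\<dots> \<le> norm (F ?a) * norm y" by (rule norm_cauchy_schwarz)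
  also have "\<dots> \<le> norm ?a * (norm F * norm y)"
    using mult_right_mono[OF norm_blinfun[of F ?a] norm_ge_zero[of y]] by (simp add: algebra_simps)
  finally show ?thesis by (cases "?a = 0") simp_all
qed

lemma limiting_coderiv_gph_diff_image:
  fixes g :: "'a::euclidean_space \<Rightarrow> 'b::euclidean_space"
  assumes g: "(g has_derivative G) (at x)" and l: "l \<in> limiting_normal_cone D (g x)"
  shows "adjoint G l \<in> limiting_coderiv (\<lambda>x. (\<lambda>d. g x - d) ` D) x 0 l"
proof -
  let ?gph = "gph (\<lambda>x. (\<lambda>d. g x - d) ` D)"
  obtain zk vk where z: "g x \<in> D" "\<forall>k. zk k \<in> D" "zk \<longlonglongrightarrow> g x" "vk \<longlonglongrightarrow> l"
      "\<forall>k. vk k \<in> regular_normal_cone D (zk k)"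
    using l unfolding limiting_normal_cone_def by blast
  have adj: "bounded_linear (adjoint G)"
    using adjoint_linear[OF has_derivative_linear[OF g]] linear_conv_bounded_linear by blast
  have "(x, g x - zk k) \<in> ?gph" for k using z(2) by (simp add: mem_gph_diff_image)
  moreover have "(\<lambda>k. (x, g x - zk k)) \<longlonglongrightarrow> (x, 0)"
    using tendsto_Pair[OF tendsto_const[of x] tendsto_diff[OF tendsto_const[of "g x"] z(3)]] by simp
  moreover have "(\<lambda>k. (adjoint G (vk k), - vk k)) \<longlonglongrightarrow> (adjoint G l, - l)"
    by (intro tendsto_Pair tendsto_minus bounded_linear.tendsto[OF adj] z(4))
  moreover have "(adjoint G (vk k), - vk k) \<in> regular_normal_cone ?gph (x, g x - zk k)" for k
    using regular_normal_cone_gph_diff_image[OF g, of "vk k" D "g x - zk k"] z(5) by simp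
  moreover have "(x, 0) \<in> ?gph" using z(1) by (simp add: mem_gph_diff_image)
  ultimately have "(adjoint G l, - l) \<in> limiting_normal_cone ?gph (x, 0)"
    unfolding limiting_normal_cone_def mem_Collect_eq
    by (intro conjI exI[of _ "\<lambda>k. (x, g x - zk k)"] exI[of _ "\<lambda>k. (adjoint G (vk k), - vk k)"]) auto
  then show ?thesis unfolding limiting_coderiv_def by simp
qed

lemma regular_normal_cone_local_cone_scaleR:
  assumes "local_cone D p T" "conic T"
  obtains \<epsilon> where "\<epsilon> > 0"
    "\<And>\<tau> w. 0 < \<tau> \<Longrightarrow> \<tau> * norm w < \<epsilon> \<Longrightarrow> regular_normal_cone D (p + \<tau> *\<^sub>R w) = regular_normal_cone T w"
proof -
  obtain \<epsilon> where "\<epsilon> > 0" "\<And>w. norm w < \<epsilon> \<Longrightarrow> regular_normal_cone D (p + w) = regular_normal_cone T w"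
    using regular_normal_cone_local_cone[OF assms(1)] by blast
  then show ?thesis
    using that regular_normal_cone_conic_scaleR[OF assms(2)] by (simp add: abs_of_pos)
qed

lemma null_sequence_with_small_multiples:
  fixes v :: "nat \<Rightarrow> 'a::real_normed_vector"
  assumes "\<epsilon> > 0"
  obtains \<tau> :: "nat \<Rightarrow> real" where "\<forall>i. \<tau> i > 0" "\<tau> \<longlonglongrightarrow> 0" "\<And>i. \<tau> i * norm (v i) < \<epsilon>"
proof -
  define c where "c i = \<epsilon> / (2 * (norm (v i) + 1))" for i
  define \<tau> where "\<tau> i = c i * inverse (real (Suc i))" for i
  have c: "0 < c i" "c i \<le> \<epsilon> / 2" "c i * norm (v i) < \<epsilon>" for i
  proof -
    have n: "norm (v i) + 1 > 0" by (simp add: add_nonneg_pos)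
    then show "0 < c i" "c i \<le> \<epsilon> / 2" using assms by (simp_all add: c_def field_simps)
    have "c i * norm (v i) = \<epsilon> / 2 * (norm (v i) / (norm (v i) + 1))" by (simp add: c_def)
    also have "\<dots> < \<epsilon> / 2 * 1"
      using n assms by (intro mult_strict_left_mono) (simp_all add: divide_less_eq_1)
    finally show "c i * norm (v i) < \<epsilon>" using assms by simp
  qed
  have \<tau>: "\<forall>i. \<tau> i > 0" using c(1) by (simp add: \<tau>_def)
  have \<tau>_small: "\<tau> i * norm (v i) < \<epsilon>" for i
  proof -
    have "\<tau> i \<le> c i" using c(1)[of i] by (simp add: \<tau>_def field_simps)
    then have "\<tau> i * norm (v i) \<le> c i * norm (v i)" by (simp add: mult_right_mono)
    then show ?thesis using c(3)[of i] by linarith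
  qed
  have "\<tau> \<longlonglongrightarrow> 0"
  proof (rule Lim_null_comparison)
    show "\<forall>\<^sub>F i in sequentially. norm (\<tau> i) \<le> \<epsilon> / 2 * inverse (real (Suc i))"
      using c(1,2) by (intro always_eventually allI) (simp add: \<tau>_def mult_right_mono abs_of_pos)
    show "(\<lambda>i. \<epsilon> / 2 * inverse (real (Suc i))) \<longlonglongrightarrow> 0"
      using tendsto_mult_right_zero[OF LIMSEQ_inverse_real_of_nat] .
  qed
  show ?thesis using that \<tau> \<tau>_small \<open>\<tau> \<longlonglongrightarrow> 0\<close> by blast
qed

lemma dir_limiting_coderiv_gph_diff_image:
  fixes g :: "'a::euclidean_space \<Rightarrow> 'b::euclidean_space"
  assumes g: "\<And>x. (g has_derivative blinfun_apply (Dg x)) (at x)" and Dg: "isCont Dg x0"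
    and T: "local_cone D (g x0) T" "conic T"
    and l: "l \<in> limiting_normal_cone T (Dg x0 u)"
  shows "adjoint (Dg x0) l \<in> dir_limiting_coderiv (\<lambda>x. (\<lambda>d. g x - d) ` D) x0 0 u 0 l"
proof -
  let ?gph = "gph (\<lambda>x. (\<lambda>d. g x - d) ` D)"
  obtain vi li where v: "Dg x0 u \<in> T" "vi \<longlonglongrightarrow> Dg x0 u" "li \<longlonglongrightarrow> l"
      "\<forall>i. li i \<in> regular_normal_cone T (vi i)"
    using l unfolding limiting_normal_cone_def by blast
  obtain \<epsilon> where "\<epsilon> > 0" and \<epsilon>: "\<And>\<tau> w. 0 < \<tau> \<Longrightarrow> \<tau> * norm w < \<epsilon> \<Longrightarrow>
      regular_normal_cone D (g x0 + \<tau> *\<^sub>R w) = regular_normal_cone T w"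
    using regular_normal_cone_local_cone_scaleR[OF T] by blast
  obtain \<tau> where \<tau>: "\<forall>i. \<tau> i > 0" "\<tau> \<longlonglongrightarrow> 0" and \<tau>_small: "\<And>i. \<tau> i * norm (vi i) < \<epsilon>"
    using null_sequence_with_small_multiples[OF \<open>\<epsilon> > 0\<close>] by metis
  define x where "x i = x0 + \<tau> i *\<^sub>R u" for i
  define y where "y i = g (x i) - (g x0 + \<tau> i *\<^sub>R vi i)" for i
  define dk where "dk i = (u, (1 / \<tau> i) *\<^sub>R y i)" for i
  define vk where "vk i = (adjoint (Dg (x i)) (li i), - li i)" for i
  have "vk i \<in> regular_normal_cone ?gph ((x0, 0) + \<tau> i *\<^sub>R dk i)" for i
  proof -
    have "li i \<in> regular_normal_cone D (g (x i) - y i)"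
      using \<epsilon>[OF \<tau>(1)[rule_format] \<tau>_small] v(4) by (simp add: y_def add.commute)
    then show ?thesis
      using regular_normal_cone_gph_diff_image[OF g] \<tau>(1)[rule_format, of i]
      by (simp add: vk_def dk_def x_def)
  qed
  moreover have "x \<longlonglongrightarrow> x0"
    using tendsto_add[OF tendsto_const tendsto_scaleR[OF \<tau>(2) tendsto_const]]
    by (simp add: x_def[abs_def])
  then have "vk \<longlonglongrightarrow> (adjoint (Dg x0) l, - l)"
    unfolding vk_def[abs_def]
    by (intro tendsto_Pair tendsto_minus tendsto_adjoint_blinfun isCont_tendsto_compose[OF Dg] v(3))
  moreover have "(\<lambda>i. (1 / \<tau> i) *\<^sub>R y i) \<longlonglongrightarrow> Dg x0 u - Dg x0 u"
  proof -
    have "(1 / \<tau> i) *\<^sub>R y i = (1 / \<tau> i) *\<^sub>R (g (x0 + \<tau> i *\<^sub>R u) - g x0) - vi i" for i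
      using \<tau>(1)[rule_format, of i] by (simp add: y_def x_def algebra_simps)
    then show ?thesis
      using tendsto_diff[OF has_derivative_diff_quotient_along[OF g[of x0] \<tau>, of u] v(2)]
      by simp
  qed
  then have "dk \<longlonglongrightarrow> (u, 0)" unfolding dk_def[abs_def] by (intro tendsto_Pair tendsto_const) simp
  moreover have "(x0, 0) \<in> ?gph"
    using local_cone_mem_iff_zero_mem[OF T(1)] conic_contains_0[OF T(2)] v(1) by (auto simp: mem_gph_diff_image)
  ultimately have "(adjoint (Dg x0) l, - l) \<in> dir_limiting_normal_cone ?gph (x0, 0) (u, 0)"
    unfolding dir_limiting_normal_cone_def using \<tau> by blast
  then show ?thesis unfolding dir_limiting_coderiv_def by simp
qed

lemma convex_cone_subset_tangent_cone:
  assumes "convex_cone Q" "Q \<subseteq> K" "y \<in> Q" "z \<in> Q"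
  shows "z \<in> tangent_cone K y"
proof -
  define t where "t k = inverse (real (Suc k))" for k
  have "\<forall>k. t k > 0" "t \<longlonglongrightarrow> 0" unfolding t_def by (simp, rule LIMSEQ_inverse_real_of_nat)
  moreover have "y + t k *\<^sub>R z \<in> K" for k
  proof -
    have "t k *\<^sub>R z \<in> Q" using convex_cone_scaleR[OF assms(1)] assms(4) t_def by simp
    then show ?thesis using convex_cone_add[OF assms(1,3)] assms(2) by blast
  qed
  ultimately show ?thesis
    unfolding tangent_cone_def using assms(2,3) by (auto intro!: exI[of _ t] exI[of _ "\<lambda>_. z"])
qed

lemma limiting_normal_cone_conic_scaled_limit:
  assumes T: "closed T" "conic T" and t: "\<forall>k. t k > 0"
    and \<mu>: "eventually (\<lambda>k. \<mu> \<in> regular_normal_cone T (w k)) sequentially"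
    and lim: "(\<lambda>k. (1 / t k) *\<^sub>R w k) \<longlonglongrightarrow> v"
  shows "\<mu> \<in> limiting_normal_cone T v"
proof -
  obtain N where N: "\<And>k. k \<ge> N \<Longrightarrow> \<mu> \<in> regular_normal_cone T (w k)"
    using \<mu> unfolding eventually_sequentially by blast
  define z where "z k = (1 / t (k + N)) *\<^sub>R w (k + N)" for k
  have zN: "\<mu> \<in> regular_normal_cone T (z k)" for k
    using N[of "k + N"] regular_normal_cone_conic_scaleR[OF T(2)] t by (simp add: z_def)
  then have zT: "z k \<in> T" for k unfolding regular_normal_cone_def by blast
  have zv: "z \<longlonglongrightarrow> v"
    using LIMSEQ_ignore_initial_segment[OF lim, of N] unfolding z_def .
  have "v \<in> T"
    by (intro Lim_in_closed_set[OF T(1) _ _ zv]) (simp_all add: zT)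
  then show ?thesis
    unfolding limiting_normal_cone_def mem_Collect_eq using zT zv zN tendsto_const by blast
qed

definition second_order_system ::
  "('b::real_normed_vector \<Rightarrow> 'a::real_normed_vector) \<Rightarrow> ('b \<Rightarrow> 'a) \<Rightarrow> 'b set \<Rightarrow> 'a \<Rightarrow> 'b \<Rightarrow> 'b \<Rightarrow> bool"
  where "second_order_system A H K xs y z \<longleftrightarrow> xs = H y + A z \<and> y \<in> K \<and> A y = 0 \<and> z \<in> tangent_cone K y"

locale second_order_sequence =
  fixes At Hm :: "'b::euclidean_space \<Rightarrow> 'a::euclidean_space"
    and lam :: "nat \<Rightarrow> 'b" and t \<eta> :: "nat \<Rightarrow> real" and xsk r :: "nat \<Rightarrow> 'a" and xs :: 'a
  assumes linear_At: "linear At" and linear_Hm: "linear Hm"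
    and t_pos: "\<And>k. t k > 0" and t_tendsto: "t \<longlonglongrightarrow> 0"
    and xsk_tendsto: "xsk \<longlonglongrightarrow> xs"
    and xsk_eq: "\<And>k. xsk k = At (lam k) + t k *\<^sub>R Hm (lam k) + r k"
    and r_bound: "\<And>k. norm (r k) \<le> t k * \<eta> k * norm (lam k)" and \<eta>_tendsto: "\<eta> \<longlonglongrightarrow> 0"
begin

lemma scaled_limit:
  fixes s :: "nat \<Rightarrow> nat"
  assumes Q: "closed Q" "convex_cone Q" "closed (At ` Q)"
    and s: "strict_mono s" "\<And>k. lam (s k) \<in> Q"
    and \<sigma>: "\<And>k. \<sigma> k > 0" "(\<lambda>k. 1 / \<sigma> k) \<longlonglongrightarrow> c" "(\<lambda>k. (t (s k) / \<sigma> k) *\<^sub>R lam (s k)) \<longlonglongrightarrow> y"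
  shows "y \<in> Q" "At y = 0" "c *\<^sub>R xs - Hm y \<in> At ` Q"
proof -
  let ?w = "\<lambda>k. (t (s k) / \<sigma> k) *\<^sub>R lam (s k)" and ?p = "\<lambda>k. At ((1 / \<sigma> k) *\<^sub>R lam (s k))"
  have At: "bounded_linear At" and Hm: "bounded_linear Hm"
    using linear_At linear_Hm linear_conv_bounded_linear by blast+
  have "?w k \<in> Q" "(1 / \<sigma> k) *\<^sub>R lam (s k) \<in> Q" for k
    using convex_cone_scaleR[OF Q(2)] s(2) t_pos[of "s k"] \<sigma>(1)[of k] by simp_all
  then have "?p k \<in> At ` Q" for k by blast
  show "y \<in> Q" by (intro Lim_in_closed_set[OF Q(1) _ _ \<sigma>(3)]) (simp_all add: \<open>\<And>k. ?w k \<in> Q\<close>)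
  have p_eq: "?p k = (1 / \<sigma> k) *\<^sub>R xsk (s k) - Hm (?w k) - (1 / \<sigma> k) *\<^sub>R r (s k)" for k
    unfolding xsk_eq[of "s k"] linear_cmul[OF linear_At] linear_cmul[OF linear_Hm]
    by (simp add: algebra_simps)
  have "(\<lambda>k. (1 / \<sigma> k) *\<^sub>R r (s k)) \<longlonglongrightarrow> 0"
  proof (rule Lim_null_comparison)
    show "eventually (\<lambda>k. norm ((1 / \<sigma> k) *\<^sub>R r (s k)) \<le> \<eta> (s k) * norm (?w k)) sequentially"
    proof (intro always_eventually allI)
      fix k
      have "norm ((1 / \<sigma> k) *\<^sub>R r (s k)) \<le> (1 / \<sigma> k) * (t (s k) * \<eta> (s k) * norm (lam (s k)))"
        using r_bound[of "s k"] \<sigma>(1)[of k] by (simp add: divide_right_mono)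
      also have "\<dots> = \<eta> (s k) * norm (?w k)"
        using t_pos[of "s k"] \<sigma>(1)[of k] by (simp add: abs_of_pos)
      finally show "norm ((1 / \<sigma> k) *\<^sub>R r (s k)) \<le> \<eta> (s k) * norm (?w k)" .
    qed
    show "(\<lambda>k. \<eta> (s k) * norm (?w k)) \<longlonglongrightarrow> 0"
      using tendsto_mult[OF LIMSEQ_subseq_LIMSEQ[OF \<eta>_tendsto s(1)] tendsto_norm[OF \<sigma>(3)]]
      by (simp add: o_def)
  qed
  then have "(\<lambda>k. (1 / \<sigma> k) *\<^sub>R xsk (s k) - Hm (?w k) - (1 / \<sigma> k) *\<^sub>R r (s k)) \<longlonglongrightarrow> c *\<^sub>R xs - Hm y - 0"
    using LIMSEQ_subseq_LIMSEQ[OF xsk_tendsto s(1)]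
    by (intro tendsto_diff tendsto_scaleR \<sigma>(2) bounded_linear.tendsto[OF Hm \<sigma>(3)]) (simp_all add: o_def)
  then have p: "?p \<longlonglongrightarrow> c *\<^sub>R xs - Hm y" unfolding p_eq by simp
  show "c *\<^sub>R xs - Hm y \<in> At ` Q"
    by (intro Lim_in_closed_set[OF Q(3) _ _ p]) (simp_all add: \<open>\<And>k. ?p k \<in> At ` Q\<close>)
  have "(\<lambda>k. t (s k) *\<^sub>R ?p k) \<longlonglongrightarrow> 0 *\<^sub>R (c *\<^sub>R xs - Hm y)"
    using LIMSEQ_subseq_LIMSEQ[OF t_tendsto s(1)] by (intro tendsto_scaleR p) (simp add: o_def)
  moreover have "t (s k) *\<^sub>R ?p k = At (?w k)" for k
    by (simp add: linear_cmul[OF linear_At])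
  ultimately have "(\<lambda>k. At (?w k)) \<longlonglongrightarrow> 0" by simp
  then show "At y = 0" using bounded_linear.tendsto[OF At \<sigma>(3)] LIMSEQ_unique by blast
qed

lemma exists_second_order_system_if_bounded:
  fixes s :: "nat \<Rightarrow> nat"
  assumes Q: "closed Q" "convex_cone Q" "closed (At ` Q)" "Q \<subseteq> K"
    and s: "strict_mono s" "\<And>k. lam (s k) \<in> Q"
    and bounded: "bounded (range (\<lambda>k. t (s k) *\<^sub>R lam (s k)))"
  shows "\<exists>y z. second_order_system At Hm K xs y z"
proof -
  obtain y s' where s': "strict_mono s'" "((\<lambda>k. t (s k) *\<^sub>R lam (s k)) \<circ> s') \<longlonglongrightarrow> y"
    using bounded_imp_convergent_subsequence[OF bounded] by blast
  have "y \<in> Q" "At y = 0" "1 *\<^sub>R xs - Hm y \<in> At ` Q"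
    using scaled_limit[OF Q(1-3) strict_mono_o[OF s(1) s'(1)], of "\<lambda>_. 1" 1 y] s(2) s'(2)
    by (simp_all add: o_def)
  then obtain z where "z \<in> Q" "xs = Hm y + At z" by (metis add.commute diff_eq_eq imageE scaleR_one)
  then show ?thesis
    unfolding second_order_system_def
    using \<open>y \<in> Q\<close> \<open>At y = 0\<close> Q(2,4) convex_cone_subset_tangent_cone by blast
qed

text \<open>Dividing by \<open>t\<^sub>k|\<lambda>\<^sub>k|\<close> would produce a unit vector solving the homogeneous system.\<close>
lemma scale_not_filterlim_at_top:
  fixes s :: "nat \<Rightarrow> nat"
  assumes Q: "closed Q" "convex_cone Q" "closed (At ` Q)" "Q \<subseteq> K"
    and s: "strict_mono s" "\<And>k. lam (s k) \<in> Q"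
    and qual: "\<And>y z. second_order_system At Hm K 0 y z \<Longrightarrow> y = 0"
  shows "\<not> filterlim (\<lambda>k. t (s k) * norm (lam (s k))) at_top sequentially"
proof
  let ?\<rho> = "\<lambda>k. t (s k) * norm (lam (s k))"
  assume \<rho>: "filterlim ?\<rho> at_top sequentially"
  define \<sigma> where "\<sigma> k = max 1 (?\<rho> k)" for k
  let ?w = "\<lambda>k. (t (s k) / \<sigma> k) *\<^sub>R lam (s k)"
  have \<sigma>: "\<sigma> k > 0" "?\<rho> k \<le> \<sigma> k" for k by (auto simp: \<sigma>_def)
  have norm_w: "norm (?w k) = ?\<rho> k / \<sigma> k" for k
    using t_pos[of "s k"] \<sigma>(1)[of k] by (simp add: abs_of_pos)
  have "norm (?w k) \<le> 1" for k unfolding norm_w using \<sigma>[of k] by (simp add: divide_le_eq_1)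
  then have "bounded (range ?w)" by (intro boundedI) blast
  then obtain y s' where s': "strict_mono s'" "(?w \<circ> s') \<longlonglongrightarrow> y"
    using bounded_imp_convergent_subsequence by blast
  have "filterlim (\<lambda>k. \<sigma> (s' k)) at_top sequentially"
    by (rule filterlim_at_top_mono[OF filterlim_compose[OF \<rho> filterlim_subseq[OF s'(1)]]])
      (intro always_eventually allI \<sigma>(2))
  then have "(\<lambda>k. 1 / \<sigma> (s' k)) \<longlonglongrightarrow> 0"
    using tendsto_inverse_0_at_top by (simp add: divide_inverse)
  then have "y \<in> Q" "At y = 0" "0 *\<^sub>R xs - Hm y \<in> At ` Q"
    using scaled_limit[OF Q(1-3) strict_mono_o[OF s(1) s'(1)], of "\<lambda>k. \<sigma> (s' k)" 0 y] s(2) s'(2) \<sigma>(1)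
    by (simp_all add: o_def)
  then obtain z where "z \<in> Q" "Hm y + At z = 0" by (metis add_eq_0_iff imageE scaleR_zero_left diff_0)
  then have "y = 0"
    using qual \<open>y \<in> Q\<close> \<open>At y = 0\<close> Q(2,4) convex_cone_subset_tangent_cone
    unfolding second_order_system_def by (metis subsetD)
  moreover have "norm y = 1"
  proof -
    have "eventually (\<lambda>k. 1 \<le> ?\<rho> (s' k)) sequentially"
      using filterlim_compose[OF \<rho> filterlim_subseq[OF s'(1)]] unfolding filterlim_at_top by blast
    then have "eventually (\<lambda>k. norm (?w (s' k)) = 1) sequentially"
      by (rule eventually_mono) (auto simp: norm_w \<sigma>_def)
    then have "(\<lambda>k. norm (?w (s' k))) \<longlonglongrightarrow> 1" by (rule tendsto_eventually)
    moreover have "(\<lambda>k. norm (?w (s' k))) \<longlonglongrightarrow> norm y" using tendsto_norm[OF s'(2)] by (simp add: o_def)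
    ultimately show ?thesis using LIMSEQ_unique by blast
  qed
  ultimately show False by simp
qed

lemma exists_second_order_system_in_cone:
  fixes s :: "nat \<Rightarrow> nat"
  assumes Q: "closed Q" "convex_cone Q" "closed (At ` Q)" "Q \<subseteq> K"
    and s: "strict_mono s" "\<And>k. lam (s k) \<in> Q"
    and qual: "\<And>y z. second_order_system At Hm K 0 y z \<Longrightarrow> y = 0"
  shows "\<exists>y z. second_order_system At Hm K xs y z"
proof -
  let ?\<rho> = "\<lambda>k. t (s k) * norm (lam (s k))"
  have "\<not> filterlim ?\<rho> at_top sequentially"
    using scale_not_filterlim_at_top[OF Q s] qual by blast
  then obtain Z where "\<not> eventually (\<lambda>k. Z \<le> ?\<rho> k) sequentially"
    unfolding filterlim_at_top by blast
  then have "infinite {k. ?\<rho> k < Z}"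
    unfolding cofinite_eq_sequentially[symmetric] eventually_cofinite by (simp add: not_le)
  then obtain s2 :: "nat \<Rightarrow> nat" where s2: "strict_mono s2" "\<And>k. ?\<rho> (s2 k) < Z"
    using infinite_enumerate by blast
  have "norm (t (s (s2 k)) *\<^sub>R lam (s (s2 k))) \<le> Z" for k
    using s2(2)[of k] t_pos[of "s (s2 k)"] by (simp add: abs_of_pos)
  then have "bounded (range (\<lambda>k. t ((s \<circ> s2) k) *\<^sub>R lam ((s \<circ> s2) k)))"
    by (intro boundedI) auto
  then show ?thesis
    using exists_second_order_system_if_bounded[OF Q strict_mono_o[OF s(1) s2(1)]] s(2) by simp
qed

lemma exists_second_order_system:
  assumes \<Q>: "finite \<Q>" "\<And>Q. Q \<in> \<Q> \<Longrightarrow> closed Q \<and> convex_cone Q \<and> closed (At ` Q)"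
    and lam: "\<And>k. lam k \<in> Qk k" and eventually_\<Q>: "eventually (\<lambda>k. Qk k \<in> \<Q>) sequentially"
    and recurrent: "\<And>(s::nat \<Rightarrow> nat) Q. strict_mono s \<Longrightarrow> (\<And>k. Qk (s k) = Q) \<Longrightarrow> Q \<subseteq> K"
    and qual: "\<And>y z. second_order_system At Hm K 0 y z \<Longrightarrow> y = 0"
  shows "\<exists>y z. second_order_system At Hm K xs y z"
proof -
  obtain N where N: "\<And>k. k \<ge> N \<Longrightarrow> Qk k \<in> \<Q>"
    using eventually_\<Q> unfolding eventually_sequentially by blast
  have "finite (Qk ` {N..})" using N \<Q>(1) finite_subset[of "Qk ` {N..}" \<Q>] by auto
  then obtain k0 where "k0 \<ge> N" "infinite {k\<in>{N..}. Qk k = Qk k0}"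
    using pigeonhole_infinite[OF infinite_Ici] by auto
  then obtain s :: "nat \<Rightarrow> nat" where s: "strict_mono s" "\<And>k. s k \<in> {k\<in>{N..}. Qk k = Qk k0}"
    using infinite_enumerate by blast
  have "Qk (s k) = Qk k0" for k using s(2)[of k] by simp
  moreover have "Qk k0 \<in> \<Q>" using N \<open>k0 \<ge> N\<close> by blast
  ultimately show ?thesis
    using exists_second_order_system_in_cone[of "Qk k0" K s] \<Q>(2) recurrent[OF s(1)] s(1) lam qual by metis
qed

end

lemma locally_polyhedral_tangent_cone:
  fixes D :: "'a::euclidean_space set"
  assumes "locally_polyhedral D p"
  obtains \<S> where "finite \<S>" "\<forall>S\<in>\<S>. finite S" "tangent_cone D p = (\<Union>S\<in>\<S>. convex_cone hull S)"
    "local_cone D p (tangent_cone D p)" "closed (tangent_cone D p)" "conic (tangent_cone D p)"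
proof -
  obtain \<S> where \<S>: "finite \<S>" "\<forall>S\<in>\<S>. finite S" "local_cone D p (\<Union>S\<in>\<S>. convex_cone hull S)"
    using locally_polyhedral_local_cone[OF assms] by blast
  have "closed (\<Union>S\<in>\<S>. convex_cone hull S)"
    using \<S>(1,2) by (intro closed_UN) (auto intro: closed_convex_cone_hull)
  moreover have "conic (\<Union>S\<in>\<S>. convex_cone hull S)"
    unfolding conic_def using conic_convex_cone_hull conicD by blast
  ultimately show ?thesis
    using that \<S> tangent_cone_local_cone[OF \<S>(3)] by simp
qed

lemma diff_quotient_blinfun_remainder:
  fixes F :: "'a::real_normed_vector \<Rightarrow> 'b::real_normed_vector \<Rightarrow>\<^sub>L 'c::real_normed_vector"
  assumes F: "(F has_derivative blinfun_apply F') (at x0)" and xk: "xk \<longlonglongrightarrow> x0" "\<And>k. xk k \<noteq> x0"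
    and dir: "(\<lambda>k. (1 / norm (xk k - x0)) *\<^sub>R (xk k - x0)) \<longlonglongrightarrow> u"
  shows "(\<lambda>k. norm (F (xk k) - F x0 - norm (xk k - x0) *\<^sub>R F' u) / norm (xk k - x0)) \<longlonglongrightarrow> 0"
proof -
  have "(\<lambda>k. (1 / norm (xk k - x0)) *\<^sub>R (F (xk k) - F x0) - F' u) \<longlonglongrightarrow> F' u - F' u"
    by (intro tendsto_diff has_derivative_dir_diff_quotient[OF F xk(1) dir] tendsto_const)
  then have "(\<lambda>k. norm ((1 / norm (xk k - x0)) *\<^sub>R (F (xk k) - F x0) - F' u)) \<longlonglongrightarrow> 0"
    using tendsto_norm_zero by fastforce
  moreover have "norm ((1 / norm (xk k - x0)) *\<^sub>R (F (xk k) - F x0) - F' u)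
      = norm (F (xk k) - F x0 - norm (xk k - x0) *\<^sub>R F' u) / norm (xk k - x0)" for k
  proof -
    have "(1 / norm (xk k - x0)) *\<^sub>R (F (xk k) - F x0) - F' u
        = (1 / norm (xk k - x0)) *\<^sub>R (F (xk k) - F x0 - norm (xk k - x0) *\<^sub>R F' u)"
      using xk(2)[of k] by (simp add: algebra_simps)
    then show ?thesis by simp
  qed
  ultimately show ?thesis by simp
qed

lemma second_order_sequence_adjoint_expansion:
  fixes Dg :: "'a::euclidean_space \<Rightarrow> 'a \<Rightarrow>\<^sub>L 'b::euclidean_space"
  assumes Dg: "(Dg has_derivative blinfun_apply D2) (at xb)" and xk: "xk \<longlonglongrightarrow> xb" "\<And>k. xk k \<noteq> xb"
    and dir: "(\<lambda>k. (1 / norm (xk k - xb)) *\<^sub>R (xk k - xb)) \<longlonglongrightarrow> u"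
    and xs: "(\<lambda>k. adjoint (Dg (xk k)) (lk k)) \<longlonglongrightarrow> xs"
  shows "second_order_sequence (adjoint (Dg xb)) (adjoint (D2 u)) lk (\<lambda>k. norm (xk k - xb))
    (\<lambda>k. norm (Dg (xk k) - Dg xb - norm (xk k - xb) *\<^sub>R D2 u) / norm (xk k - xb))
    (\<lambda>k. adjoint (Dg (xk k)) (lk k))
    (\<lambda>k. adjoint (Dg (xk k) - Dg xb - norm (xk k - xb) *\<^sub>R D2 u) (lk k)) xs"
proof (rule second_order_sequence.intro)
  show "linear (adjoint (Dg xb))" "linear (adjoint (D2 u))"
    by (simp_all add: adjoint_linear linear_blinfun_apply)
  show "norm (xk k - xb) > 0" for k using xk(2) by simp
  show "(\<lambda>k. norm (xk k - xb)) \<longlonglongrightarrow> 0" using tendsto_norm_zero[OF LIM_zero[OF xk(1)]] .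
  show "(\<lambda>k. adjoint (Dg (xk k)) (lk k)) \<longlonglongrightarrow> xs" by (fact xs)
  show "adjoint (Dg (xk k)) (lk k) = adjoint (Dg xb) (lk k) + norm (xk k - xb) *\<^sub>R adjoint (D2 u) (lk k)
      + adjoint (Dg (xk k) - Dg xb - norm (xk k - xb) *\<^sub>R D2 u) (lk k)" for k
    by (simp add: adjoint_blinfun_linear_combination)
  show "norm (adjoint (Dg (xk k) - Dg xb - norm (xk k - xb) *\<^sub>R D2 u) (lk k))
      \<le> norm (xk k - xb) * (norm (Dg (xk k) - Dg xb - norm (xk k - xb) *\<^sub>R D2 u) / norm (xk k - xb))
        * norm (lk k)" for k
    using norm_adjoint_blinfun_le xk(2)[of k] by simp
  show "(\<lambda>k. norm (Dg (xk k) - Dg xb - norm (xk k - xb) *\<^sub>R D2 u) / norm (xk k - xb)) \<longlonglongrightarrow> 0"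
    by (rule diff_quotient_blinfun_remainder[OF Dg xk dir])
qed

lemma eventually_regular_normal_cone_local_cone:
  assumes "local_cone D p T" "zk \<longlonglongrightarrow> p" "\<And>k. zk k \<in> D"
  shows "eventually (\<lambda>k. zk k - p \<in> T \<and> regular_normal_cone D (zk k) = regular_normal_cone T (zk k - p))
    sequentially"
proof -
  obtain \<epsilon> where "\<epsilon> > 0" and \<epsilon>: "\<And>w. norm w < \<epsilon> \<Longrightarrow> regular_normal_cone D (p + w) = regular_normal_cone T w"
    using regular_normal_cone_local_cone[OF assms(1)] by blast
  obtain \<epsilon>' where "\<epsilon>' > 0" and \<epsilon>': "\<And>w. norm w < \<epsilon>' \<Longrightarrow> p + w \<in> D \<longleftrightarrow> w \<in> T"
    using assms(1) unfolding local_cone_def by blast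
  have "min \<epsilon> \<epsilon>' > 0" using \<open>\<epsilon> > 0\<close> \<open>\<epsilon>' > 0\<close> by simp
  from order_tendstoD(2)[OF tendsto_norm_zero[OF LIM_zero[OF assms(2)]] this]
  have "eventually (\<lambda>k. norm (zk k - p) < min \<epsilon> \<epsilon>') sequentially" .
  then show ?thesis
  proof (rule eventually_mono)
    fix k assume "norm (zk k - p) < min \<epsilon> \<epsilon>'"
    then show "zk k - p \<in> T \<and> regular_normal_cone D (zk k) = regular_normal_cone T (zk k - p)"
      using \<epsilon>[of "zk k - p"] \<epsilon>'[of "zk k - p"] assms(3)[of k] by simp
  qed
qed

lemma recurrent_regular_normal_cone_subset:
  fixes s :: "nat \<Rightarrow> nat"
  assumes T: "local_cone D p T" "closed T" "conic T"
    and zk: "zk \<longlonglongrightarrow> p" "\<And>k. zk k \<in> D" and t: "\<And>k. t k > 0"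
    and dir: "(\<lambda>k. (1 / t k) *\<^sub>R (zk k - p)) \<longlonglongrightarrow> v"
    and s: "strict_mono s" "\<And>k. regular_normal_cone D (zk (s k)) = Q"
  shows "Q \<subseteq> limiting_normal_cone T v"
proof
  fix \<mu> assume "\<mu> \<in> Q"
  then have "eventually (\<lambda>k. \<mu> \<in> regular_normal_cone T (zk (s k) - p)) sequentially"
    using eventually_subseq[OF s(1) eventually_regular_normal_cone_local_cone[OF T(1) zk]] s(2)
    by (auto elim: eventually_mono)
  moreover have "(\<lambda>k. (1 / t (s k)) *\<^sub>R (zk (s k) - p)) \<longlonglongrightarrow> v"
    using LIMSEQ_subseq_LIMSEQ[OF dir s(1)] by (simp add: o_def)
  ultimately show "\<mu> \<in> limiting_normal_cone T v"
    by (intro limiting_normal_cone_conic_scaled_limit[OF T(2,3), of "\<lambda>k. t (s k)"]) (simp_all add: t)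
qed

lemma polar_face_intersections_closed_convex_cone:
  fixes f :: "'a::euclidean_space \<Rightarrow> 'b::euclidean_space"
  assumes "finite \<S>" "\<forall>S\<in>\<S>. finite S" "Q \<in> polar_face_intersections \<S>" "linear f"
  shows "closed Q" "convex_cone Q" "closed (f ` Q)"
  using polar_face_intersections_polyhedral_cone[OF assms(1-3)]
    closed_linear_image_polyhedral_cone[OF _ _ assms(4)]
  by (auto simp: convex_cone_def polyhedron_imp_closed polyhedron_imp_convex)

lemma asym_limit_gph_diff_image_sequences:
  fixes g :: "'a::euclidean_space \<Rightarrow> 'b::euclidean_space"
  assumes g: "\<And>x. (g has_derivative blinfun_apply (Dg x)) (at x)" and "g xb \<in> D"
    and asym: "asym_limit (\<lambda>x. (\<lambda>d. g x - d) ` D) xb 0 u xs"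
  obtains xk zk lk where "xk \<longlonglongrightarrow> xb" "\<And>k. xk k \<noteq> xb"
    "(\<lambda>k. (1 / norm (xk k - xb)) *\<^sub>R (xk k - xb)) \<longlonglongrightarrow> u"
    "zk \<longlonglongrightarrow> g xb" "\<And>k. zk k \<in> D" "(\<lambda>k. (1 / norm (xk k - xb)) *\<^sub>R (zk k - g xb)) \<longlonglongrightarrow> Dg xb u"
    "\<And>k. lk k \<in> regular_normal_cone D (zk k)" "(\<lambda>k. adjoint (Dg (xk k)) (lk k)) \<longlonglongrightarrow> xs"
proof -
  obtain xk yk xsk lk where seq: "\<And>k. (xk k, yk k) \<in> gph (\<lambda>x. (\<lambda>d. g x - d) ` D)"
      "\<And>k. 0 \<notin> (\<lambda>d. g (xk k) - d) ` D"
      "\<And>k. xsk k \<in> regular_coderiv (\<lambda>x. (\<lambda>d. g x - d) ` D) (xk k) (yk k) (lk k)"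
      "xk \<longlonglongrightarrow> xb" "yk \<longlonglongrightarrow> 0" "xsk \<longlonglongrightarrow> xs"
      "(\<lambda>k. (1 / norm (xk k - xb)) *\<^sub>R (xk k - xb)) \<longlonglongrightarrow> u"
      "(\<lambda>k. (1 / norm (xk k - xb)) *\<^sub>R (yk k - 0)) \<longlonglongrightarrow> 0"
    using asym unfolding asym_limit_def by blast
  have "0 \<in> (\<lambda>d. g xb - d) ` D" using \<open>g xb \<in> D\<close> by force
  then have xk_ne: "xk k \<noteq> xb" for k using seq(2) by metis
  have lk: "lk k \<in> regular_normal_cone D (g (xk k) - yk k)" "xsk k = adjoint (Dg (xk k)) (lk k)" for k
    using regular_coderiv_gph_diff_image[OF g] seq(3) unfolding regular_coderiv_def by blast+
  have "xsk = (\<lambda>k. adjoint (Dg (xk k)) (lk k))" using lk(2) by blast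
  then have xs: "(\<lambda>k. adjoint (Dg (xk k)) (lk k)) \<longlonglongrightarrow> xs" using seq(6) by simp
  have "(\<lambda>k. g (xk k) - yk k) \<longlonglongrightarrow> g xb - 0"
    using isCont_tendsto_compose[OF has_derivative_continuous[OF g] seq(4)] seq(5) by (intro tendsto_diff)
  then have zk: "(\<lambda>k. g (xk k) - yk k) \<longlonglongrightarrow> g xb" by simp
  have "(\<lambda>k. (1 / norm (xk k - xb)) *\<^sub>R (g (xk k) - g xb) - (1 / norm (xk k - xb)) *\<^sub>R (yk k - 0))
      \<longlonglongrightarrow> Dg xb u - 0"
    by (intro tendsto_diff has_derivative_dir_diff_quotient[OF g seq(4,7)] seq(8))
  moreover have "(1 / norm (xk k - xb)) *\<^sub>R (g (xk k) - g xb) - (1 / norm (xk k - xb)) *\<^sub>R (yk k - 0)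
      = (1 / norm (xk k - xb)) *\<^sub>R (g (xk k) - yk k - g xb)" for k
    by (simp add: algebra_simps)
  ultimately have dq: "(\<lambda>k. (1 / norm (xk k - xb)) *\<^sub>R (g (xk k) - yk k - g xb)) \<longlonglongrightarrow> Dg xb u" by simp
  have "g (xk k) - yk k \<in> D" for k using seq(1) by (simp add: mem_gph_diff_image)
  then show ?thesis using that[OF seq(4) xk_ne seq(7) zk _ dq lk(1) xs] by blast
qed

lemma asym_limit_second_order_system:
  fixes g :: "'a::euclidean_space \<Rightarrow> 'b::euclidean_space"
    and Dg :: "'a \<Rightarrow> 'a \<Rightarrow>\<^sub>L 'b" and D2 :: "'a \<Rightarrow>\<^sub>L 'a \<Rightarrow>\<^sub>L 'b"
  assumes g: "\<And>x. (g has_derivative blinfun_apply (Dg x)) (at x)"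
    and Dg: "(Dg has_derivative blinfun_apply D2) (at xb)"
    and D: "locally_polyhedral D (g xb)" "g xb \<in> D"
    and K: "K = limiting_normal_cone (tangent_cone D (g xb)) (Dg xb u)"
    and qual: "\<And>y z. second_order_system (adjoint (Dg xb)) (adjoint (D2 u)) K 0 y z \<Longrightarrow> y = 0"
    and asym: "asym_limit (\<lambda>x. (\<lambda>d. g x - d) ` D) xb 0 u xs"
  shows "\<exists>y z. second_order_system (adjoint (Dg xb)) (adjoint (D2 u)) K xs y z"
proof -
  obtain xk zk lk where xk: "xk \<longlonglongrightarrow> xb" "\<And>k. xk k \<noteq> xb"
      "(\<lambda>k. (1 / norm (xk k - xb)) *\<^sub>R (xk k - xb)) \<longlonglongrightarrow> u"
    and zk: "zk \<longlonglongrightarrow> g xb" "\<And>k. zk k \<in> D"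
      "(\<lambda>k. (1 / norm (xk k - xb)) *\<^sub>R (zk k - g xb)) \<longlonglongrightarrow> Dg xb u"
    and lk: "\<And>k. lk k \<in> regular_normal_cone D (zk k)" "(\<lambda>k. adjoint (Dg (xk k)) (lk k)) \<longlonglongrightarrow> xs"
    using asym_limit_gph_diff_image_sequences[OF g D(2) asym] by blast
  interpret second_order_sequence "adjoint (Dg xb)" "adjoint (D2 u)" lk "\<lambda>k. norm (xk k - xb)"
    "\<lambda>k. norm (Dg (xk k) - Dg xb - norm (xk k - xb) *\<^sub>R D2 u) / norm (xk k - xb)"
    "\<lambda>k. adjoint (Dg (xk k)) (lk k)" "\<lambda>k. adjoint (Dg (xk k) - Dg xb - norm (xk k - xb) *\<^sub>R D2 u) (lk k)" xs
    by (rule second_order_sequence_adjoint_expansion[OF Dg xk lk(2)])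
  obtain \<S> where \<S>: "finite \<S>" "\<forall>S\<in>\<S>. finite S"
    and T: "tangent_cone D (g xb) = (\<Union>S\<in>\<S>. convex_cone hull S)"
      "local_cone D (g xb) (tangent_cone D (g xb))" "closed (tangent_cone D (g xb))"
      "conic (tangent_cone D (g xb))"
    using locally_polyhedral_tangent_cone[OF D(1)] by blast
  show ?thesis
  proof (rule exists_second_order_system[where \<Q>="polar_face_intersections \<S>"
        and Qk="\<lambda>k. regular_normal_cone D (zk k)"])
    show "finite (polar_face_intersections \<S>)" by (rule finite_polar_face_intersections[OF \<S>])
    show "closed Q \<and> convex_cone Q \<and> closed (adjoint (Dg xb) ` Q)" if "Q \<in> polar_face_intersections \<S>" for Q
      using polar_face_intersections_closed_convex_cone[OF \<S> that linear_At] by blast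
    show "lk k \<in> regular_normal_cone D (zk k)" for k by (rule lk(1))
    show "eventually (\<lambda>k. regular_normal_cone D (zk k) \<in> polar_face_intersections \<S>) sequentially"
      using eventually_regular_normal_cone_local_cone[OF T(2) zk(1,2)]
    proof (rule eventually_mono)
      fix k assume "zk k - g xb \<in> tangent_cone D (g xb) \<and>
        regular_normal_cone D (zk k) = regular_normal_cone (tangent_cone D (g xb)) (zk k - g xb)"
      then show "regular_normal_cone D (zk k) \<in> polar_face_intersections \<S>"
        using regular_normal_cone_mem_polar_face_intersections[OF \<S>] T(1) by simp
    qed
    show "Q \<subseteq> K" if "strict_mono s" "\<And>k. regular_normal_cone D (zk (s k)) = Q"
      for s :: "nat \<Rightarrow> nat" and Q
      unfolding K by (rule recurrent_regular_normal_cone_subset[OF T(2,3,4) zk(1,2) _ zk(3) that])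
        (simp add: xk(2))
  qed (rule qual)
qed

theorem mainTheorem12:
  fixes g :: "'a::euclidean_space \<Rightarrow> real^'m"
    and Dg :: "'a \<Rightarrow> ('a \<Rightarrow>\<^sub>L (real^'m))"
    and D2g :: "'a \<Rightarrow> ('a \<Rightarrow>\<^sub>L ('a \<Rightarrow>\<^sub>L (real^'m)))"
    and D :: "(real^'m) set"
    and xb u :: 'a
  assumes g_deriv: "\<And>x. (g has_derivative blinfun_apply (Dg x)) (at x)"
    and Dg_deriv: "\<And>x. (Dg has_derivative blinfun_apply (D2g x)) (at x)"
    and D2g_cont: "continuous_on UNIV D2g"
    and D_closed: "closed D"
    and D_poly: "locally_polyhedral D (g xb)"
    and gph_pt: "(xb, 0) \<in> gph (\<lambda>x. (\<lambda>d. g x - d) ` D)"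
    and u_unit: "norm u = 1"
    and qual: "\<And>ys zs. adjoint (blinfun_apply (Dg xb)) ys = 0 \<Longrightarrow>
        adjoint (blinfun_apply (blinfun_apply (D2g xb) u)) ys
          + adjoint (blinfun_apply (Dg xb)) zs = 0 \<Longrightarrow>
        ys \<in> limiting_normal_cone (tangent_cone D (g xb)) (Dg xb u) \<Longrightarrow>
        zs \<in> tangent_cone (limiting_normal_cone (tangent_cone D (g xb)) (Dg xb u)) ys \<Longrightarrow>
        ys = 0"
  shows
    "((\<forall>xs ys zs.
         xs = adjoint (blinfun_apply (blinfun_apply (D2g xb) u)) ys
                + adjoint (blinfun_apply (Dg xb)) zs
       \<and> ys \<in> limiting_normal_cone (tangent_cone D (g xb)) (Dg xb u)
       \<and> adjoint (blinfun_apply (Dg xb)) ys = 0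
       \<and> zs \<in> tangent_cone (limiting_normal_cone (tangent_cone D (g xb)) (Dg xb u)) ys
       \<longrightarrow> (\<exists>lam\<in>limiting_normal_cone D (g xb). xs = adjoint (blinfun_apply (Dg xb)) lam))
      \<longrightarrow> asymptotically_regular (\<lambda>x. (\<lambda>d. g x - d) ` D) xb 0 u)
   \<and>
     ((\<forall>xs ys zs.
         xs = adjoint (blinfun_apply (blinfun_apply (D2g xb) u)) ys
                + adjoint (blinfun_apply (Dg xb)) zs
       \<and> ys \<in> limiting_normal_cone (tangent_cone D (g xb)) (Dg xb u)
       \<and> adjoint (blinfun_apply (Dg xb)) ys = 0
       \<and> zs \<in> tangent_cone (limiting_normal_cone (tangent_cone D (g xb)) (Dg xb u)) ys
       \<longrightarrow> (\<exists>lam\<in>limiting_normal_cone (tangent_cone D (g xb)) (Dg xb u).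
              xs = adjoint (blinfun_apply (Dg xb)) lam))
      \<longrightarrow> strongly_asymptotically_regular (\<lambda>x. (\<lambda>d. g x - d) ` D) xb 0 u)"
proof -
  let ?\<Phi> = "\<lambda>x. (\<lambda>d. g x - d) ` D"
  let ?K = "limiting_normal_cone (tangent_cone D (g xb)) (Dg xb u)"
  let ?S = "second_order_system (adjoint (Dg xb)) (adjoint (D2g xb u)) ?K"
  have "g xb \<in> D" using gph_pt by (simp add: mem_gph_diff_image)
  moreover have "\<And>y z. ?S 0 y z \<Longrightarrow> y = 0"
    using qual unfolding second_order_system_def by (metis add.commute)
  ultimately have system: "\<exists>ys zs. ?S xs ys zs" if "asym_limit ?\<Phi> xb 0 u xs" for xs
    using asym_limit_second_order_system[OF g_deriv Dg_deriv D_poly _ refl _ that] by blast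
  have T: "local_cone D (g xb) (tangent_cone D (g xb))" "conic (tangent_cone D (g xb))"
    using locally_polyhedral_tangent_cone[OF D_poly] by metis+
  have "isCont Dg xb" using has_derivative_continuous[OF Dg_deriv] .
  have "asymptotically_regular ?\<Phi> xb 0 u"
    if "\<forall>xs ys zs. ?S xs ys zs \<longrightarrow> (\<exists>lam\<in>limiting_normal_cone D (g xb). xs = adjoint (Dg xb) lam)"
    unfolding asymptotically_regular_def Im_def
    using system that limiting_coderiv_gph_diff_image[OF g_deriv] by fastforce
  moreover have "strongly_asymptotically_regular ?\<Phi> xb 0 u"
    if "\<forall>xs ys zs. ?S xs ys zs \<longrightarrow> (\<exists>lam\<in>?K. xs = adjoint (Dg xb) lam)"
    unfolding strongly_asymptotically_regular_def Im_def
    using system that dir_limiting_coderiv_gph_diff_image[OF g_deriv \<open>isCont Dg xb\<close> T] by fastforce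
  ultimately show ?thesis unfolding second_order_system_def by blast
qed

end
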